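(* Let $D$ be an integral domain with quotient field $K$, $T$ an overring of $D$, $\star$ a semistar operation on $D$, and $\ell=\ell_{\star,T}$. The following are equivalent: (i) $T$ is $(\star,\ell)$-flat over $D$; (ii) for each nonzero prime ideal $P$ of $D$, either $(PT)^\ell=T^\ell$ or $T\subseteq D_P$; (iii) for each nonzero $x\in T$, $((D:_DxD)T)^\ell=T^\ell$, where $(D:_DxD)=\{d\in D:dx\in D\}$; (iv) $T^\ell=\bigcap\{D_{N\cap D}: N$ a prime ideal of $T$ maximal with respect to the property $(N\cap D)^{\star_f}\ne D^\star\}$; (v) for each prime ideal $Q$ of $T$ with $(Q\cap D)^{\star_f}\ne D^\star$, $D_{Q\cap D}=T_Q$; (vi) for each prime ideal $N$ of $T$ maximal with respect to the property $(N\cap D)^{\star_f}\ne D^\star$, $D_{N\cap D}=T_N$; (vii) for each quasi-$\star_f$-prime ideal $P$ of $D$, $T_{D\setminus P}$ is flat over $D_P$; (viii) for each nonzero finitely generated fractional ideal $F$ of $D$, $((D:_KF)T)^\ell=(T^\ell:_KFT)$.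
   Context: Let $D$ be an integral domain with quotient field $K$. $\overline{\mathbf F}(D)$ denotes the set of all nonzero $D$-submodules of $K$ and $\mathbf f(D)$ the set of nonzero finitely generated $D$-submodules of $K$. A semistar operation on $D$ is a map $\star:\overline{\mathbf F}(D)\to\overline{\mathbf F}(D)$, $E\mapsto E^\star$, such that for all $0\ne x\in K$ and $E,F\in\overline{\mathbf F}(D)$: (1) $(xE)^\star=xE^\star$; (2) $E\subseteq F\Rightarrow E^\star\subseteq F^\star$; (3) $E\subseteq E^\star$ and $(E^\star)^\star=E^\star$. $\star_f$ is defined by $E^{\star_f}=\bigcup\{F^\star:F\in\mathbf f(D),F\subseteq E\}$. A nonzero ideal $I$ of $D$ is a quasi-$\star$-ideal if $I^\star\cap D=I$; a quasi-$\star$-prime is a prime quasi-$\star$-ideal. An overring of $D$ is a ring $T$ with $D\subseteq T\subseteq K$; the same notions are defined for semistar operations on $T$. $T$ is $(\star,\star')$-linked to $D$ if for every nonzero finitely generated ideal $F\subseteq D$ with $F^\star=D^\star$ one has $(FT)^{\star'}=T^{\star'}$; $T$ is $(\star,\star')$-flat over $D$ if it is $(\star,\star')$-linked to $D$ and $D_{Q\cap D}=T_Q$ for every quasi-$\star'_f$-prime ideal $Q$ of $T$. The semistar operation $\ell_{\star,T}$ on $T$ is defined by $E^{\ell_{\star,T}}=\bigcap\{ET_{D\setminus P}: P$ a quasi-$\star_f$-prime ideal of $D\}$ for $E\in\overline{\mathbf F}(T)$ (equal to $K$ if there are none). *)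

theory Defs
  imports Main
begin

text \<open>Throughout, the quotient field K is modelled by a type 'a of class field;
 the domain D is a subring of 'a whose quotient field is all of 'a.\<close>

definition subring :: "'a::field set \<Rightarrow> bool" where
  "subring R \<longleftrightarrow> 0 \<in> R \<and> 1 \<in> R \<and> (\<forall>x\<in>R. \<forall>y\<in>R. x + y \<in> R \<and> x - y \<in> R \<and> x * y \<in> R)"

definition quotient_field_is_univ :: "'a::field set \<Rightarrow> bool" where
  "quotient_field_is_univ D \<longleftrightarrow> (\<forall>x. \<exists>a\<in>D. \<exists>b\<in>D. b \<noteq> 0 \<and> x = a / b)"

definition overring :: "'a::field set \<Rightarrow> 'a set \<Rightarrow> bool" where
  "overring D T \<longleftrightarrow> subring T \<and> D \<subseteq> T"

definition submod :: "'a::field set \<Rightarrow> 'a set \<Rightarrow> bool" where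
  "submod R E \<longleftrightarrow> 0 \<in> E \<and> (\<forall>x\<in>E. \<forall>y\<in>E. x + y \<in> E) \<and> (\<forall>r\<in>R. \<forall>x\<in>E. r * x \<in> E)"

definition Fbar :: "'a::field set \<Rightarrow> 'a set set" where
  "Fbar R = {E. submod R E \<and> E \<noteq> {0}}"

text \<open>R-submodule generated by S (finite R-linear combinations); lin R E is also E*R\<close>
definition lin :: "'a::field set \<Rightarrow> 'a set \<Rightarrow> 'a set" where
  "lin R S = {x. \<exists>F c. finite F \<and> F \<subseteq> S \<and> (\<forall>s\<in>F. c s \<in> R) \<and> x = (\<Sum>s\<in>F. c s * s)}"

definition fgen :: "'a::field set \<Rightarrow> 'a set set" where
  "fgen R = {E. E \<noteq> {0} \<and> (\<exists>G. finite G \<and> E = lin R G)}"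

definition semistar :: "'a::field set \<Rightarrow> ('a set \<Rightarrow> 'a set) \<Rightarrow> bool" where
  "semistar R st \<longleftrightarrow>
     (\<forall>E\<in>Fbar R. st E \<in> Fbar R) \<and>
     (\<forall>x E. x \<noteq> 0 \<longrightarrow> E \<in> Fbar R \<longrightarrow> st ((\<lambda>e. x * e) ` E) = (\<lambda>e. x * e) ` st E) \<and>
     (\<forall>E\<in>Fbar R. \<forall>F\<in>Fbar R. E \<subseteq> F \<longrightarrow> st E \<subseteq> st F) \<and>
     (\<forall>E\<in>Fbar R. E \<subseteq> st E \<and> st (st E) = st E)"

definition starf :: "'a::field set \<Rightarrow> ('a set \<Rightarrow> 'a set) \<Rightarrow> 'a set \<Rightarrow> 'a set" where
  "starf R st E = \<Union>{st F | F. F \<in> fgen R \<and> F \<subseteq> E}"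

definition ideal_of :: "'a::field set \<Rightarrow> 'a set \<Rightarrow> bool" where
  "ideal_of R I \<longleftrightarrow> I \<subseteq> R \<and> submod R I"

definition prime_ideal_of :: "'a::field set \<Rightarrow> 'a set \<Rightarrow> bool" where
  "prime_ideal_of R P \<longleftrightarrow> ideal_of R P \<and> P \<noteq> R \<and>
     (\<forall>a\<in>R. \<forall>b\<in>R. a * b \<in> P \<longrightarrow> a \<in> P \<or> b \<in> P)"

definition quasi_prime :: "'a::field set \<Rightarrow> ('a set \<Rightarrow> 'a set) \<Rightarrow> 'a set \<Rightarrow> bool" where
  "quasi_prime R st P \<longleftrightarrow> prime_ideal_of R P \<and> P \<noteq> {0} \<and> st P \<inter> R = P"

definition loc :: "'a::field set \<Rightarrow> 'a set \<Rightarrow> 'a set" where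
  "loc A S = {a / s | a s. a \<in> A \<and> s \<in> S}"

definition ell :: "'a::field set \<Rightarrow> ('a set \<Rightarrow> 'a set) \<Rightarrow> 'a set \<Rightarrow> 'a set \<Rightarrow> 'a set" where
  "ell D st T E = \<Inter>{lin (loc T (D - P)) E | P. quasi_prime D (starf D st) P}"

definition linked :: "'a::field set \<Rightarrow> ('a set \<Rightarrow> 'a set) \<Rightarrow> 'a set \<Rightarrow> ('a set \<Rightarrow> 'a set) \<Rightarrow> bool" where
  "linked D st T st' \<longleftrightarrow>
     (\<forall>F. ideal_of D F \<and> F \<in> fgen D \<and> st F = st D \<longrightarrow> st' (lin T F) = st' T)"

definition flat_st :: "'a::field set \<Rightarrow> ('a set \<Rightarrow> 'a set) \<Rightarrow> 'a set \<Rightarrow> ('a set \<Rightarrow> 'a set) \<Rightarrow> bool" where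
  "flat_st D st T st' \<longleftrightarrow> linked D st T st' \<and>
     (\<forall>Q. quasi_prime T (starf T st') Q \<longrightarrow> loc D (D - (Q \<inter> D)) = loc T (T - Q))"

text \<open>Flatness of the R-module M \<subseteq> K, via the equational criterion
 (every R-linear relation among elements of M is trivial).\<close>
definition flat_module :: "'a::field set \<Rightarrow> 'a set \<Rightarrow> bool" where
  "flat_module R M \<longleftrightarrow>
    (\<forall>n (r::nat \<Rightarrow> 'a) (x::nat \<Rightarrow> 'a).
       (\<forall>i<n. r i \<in> R \<and> x i \<in> M) \<and> (\<Sum>i<n. r i * x i) = 0 \<longrightarrow>
       (\<exists>m (a::nat \<Rightarrow> nat \<Rightarrow> 'a) (y::nat \<Rightarrow> 'a).
          (\<forall>j<m. y j \<in> M) \<and> (\<forall>i<n. \<forall>j<m. a i j \<in> R) \<and>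
          (\<forall>i<n. x i = (\<Sum>j<m. a i j * y j)) \<and>
          (\<forall>j<m. (\<Sum>i<n. r i * a i j) = 0)))"

definition colon :: "'a::field set \<Rightarrow> 'a set \<Rightarrow> 'a set" where
  "colon A B = {x. \<forall>b\<in>B. x * b \<in> A}"

definition max_prop_prime :: "'a::field set \<Rightarrow> ('a set \<Rightarrow> 'a set) \<Rightarrow> 'a set \<Rightarrow> 'a set \<Rightarrow> bool" where
  "max_prop_prime D st T N \<longleftrightarrow> prime_ideal_of T N \<and> N \<noteq> {0} \<and>
     starf D st (N \<inter> D) \<noteq> st D \<and>
     (\<forall>J. ideal_of T J \<and> N \<subseteq> J \<and> starf D st (J \<inter> D) \<noteq> st D \<longrightarrow> J = N)"

end

theory Submission imports Defs begin

text \<open>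
  Write \<open>S\<^sub>P = D - P\<close> for the quasi-\<open>\<star>\<^sub>f\<close>-primes \<open>P\<close> of \<open>D\<close>, so that
  \<open>E\<^sup>\<ell> = \<Inter>\<^sub>P E T\<^sub>S\<^sub>P\<close>; thus for an ideal \<open>E\<close> of \<open>T\<close>, \<open>E\<^sup>\<ell> = T\<^sup>\<ell>\<close> iff \<open>E\<close> meets every \<open>S\<^sub>P\<close>.
  A finitely generated \<open>F\<close> with \<open>1 \<in> F\<^sup>\<star>\<close> lies in no \<open>P\<close>, so \<open>T\<close> is always
  \<open>(\<star>, \<ell>)\<close>-linked, and the quasi-\<open>\<ell>\<^sub>f\<close>-primes of \<open>T\<close> are exactly the nonzero primes \<open>Q\<close> with
  \<open>(Q \<inter> D)\<^sup>\<star>\<^sup>f \<noteq> D\<^sup>\<star>\<close>, i.e. those contracting into some \<open>P\<close> (the star primes).  Hence (i) is (v).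
  Ideals \<open>I\<close> of \<open>T\<close> maximal for \<open>1 \<notin> (I \<inter> D)\<^sup>\<star>\<^sup>f\<close> are prime, being maximal among the ideals
  missing some \<open>S\<^sub>P\<close>; so every star prime lies in a maximal one, and \<open>T\<^sup>\<ell> = \<Inter>\<^sub>N T\<^sub>N\<close> over
  those \<open>N\<close>, which handles (iv) and (vi).

  Under (v) the extended conductor \<open>(D :\<^sub>D X) T\<close> of a finite \<open>X \<subseteq> T\<close> meets every \<open>S\<^sub>P\<close>:
  otherwise a prime of \<open>T\<close> containing it and avoiding \<open>S\<^sub>P\<close> is a star prime at which \<open>X\<close> does not
  localize.  This gives (iii) and, through the equational criterion for flatness, (vii) and
  (viii).  Conversely (iii) and (vii) each give, for a star prime \<open>Q\<close> and \<open>x \<in> T\<close>, an element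
  of \<open>D - Q\<close> multiplying \<open>x\<close> into \<open>D\<close>; (ii) applied to \<open>N \<inter> D\<close> for maximal \<open>N\<close> gives (vi); and
  (viii) for \<open>F = D + xD\<close> is (iii).
\<close>

lemma subringD:
  assumes "subring R"
  shows "0 \<in> R" "1 \<in> R" "x \<in> R \<Longrightarrow> y \<in> R \<Longrightarrow> x + y \<in> R"
    "x \<in> R \<Longrightarrow> y \<in> R \<Longrightarrow> x - y \<in> R" "x \<in> R \<Longrightarrow> y \<in> R \<Longrightarrow> x * y \<in> R"
  using assms unfolding subring_def by auto

lemma subring_uminus: "subring R \<Longrightarrow> x \<in> R \<Longrightarrow> - x \<in> R"
  using subringD(1)[of R] subringD(4)[of R 0 x] by simp

lemma subring_submod: "subring R \<Longrightarrow> R' \<subseteq> R \<Longrightarrow> submod R' R"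
  unfolding submod_def subring_def by auto

lemma submod_antimono: "submod R X \<Longrightarrow> R' \<subseteq> R \<Longrightarrow> submod R' X"
  unfolding submod_def by auto

lemma submod_Int: "submod R X \<Longrightarrow> submod R Y \<Longrightarrow> submod R (X \<inter> Y)"
  unfolding submod_def by auto

lemma submod_mult_preimage: "submod R X \<Longrightarrow> submod R {z. c * z \<in> X}"
  unfolding submod_def by (simp add: distrib_left mult.left_commute)

lemma submod_sum:
  assumes "submod R X" "finite F" "\<And>c. c \<in> F \<Longrightarrow> f c \<in> X"
  shows "sum f F \<in> X"
  using assms(2,3) by (induction F rule: finite_induct) (use assms(1) in \<open>auto simp: submod_def\<close>)

subsection \<open>Linear spans\<close>

lemma lin_least:
  assumes "submod R X" "A \<subseteq> X"
  shows "lin R A \<subseteq> X"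
proof
  fix x assume "x \<in> lin R A"
  then obtain F c where F: "finite F" "F \<subseteq> A" "\<forall>s\<in>F. c s \<in> R" "x = (\<Sum>s\<in>F. c s * s)"
    unfolding lin_def by blast
  show "x \<in> X" unfolding F(4)
    by (rule submod_sum[OF assms(1) F(1)]) (use F assms in \<open>auto simp: submod_def\<close>)
qed

lemma mult_mem_lin: "k \<in> R \<Longrightarrow> a \<in> A \<Longrightarrow> k * a \<in> lin R A"
  unfolding lin_def by (intro CollectI exI[of _ "{a}"] exI[of _ "\<lambda>_. k"]) auto

lemma lin_superset: "1 \<in> R \<Longrightarrow> A \<subseteq> lin R A"
  using mult_mem_lin[of 1 R] by fastforce

lemma zero_mem_lin: "0 \<in> lin R A"
  unfolding lin_def by (intro CollectI exI[of _ "{}"]) auto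

lemma lin_mono:
  assumes "A \<subseteq> B" "R \<subseteq> R'"
  shows "lin R A \<subseteq> lin R' B"
proof
  fix x assume "x \<in> lin R A"
  then obtain F c where "finite F" "F \<subseteq> A" "\<forall>s\<in>F. c s \<in> R" "x = (\<Sum>s\<in>F. c s * s)"
    unfolding lin_def by blast
  then show "x \<in> lin R' B" unfolding lin_def using assms by (intro CollectI exI[of _ F] exI[of _ c]) auto
qed

lemma submod_lin:
  assumes R: "subring R"
  shows "submod R (lin R A)"
  unfolding submod_def
proof (intro conjI ballI)
  show "0 \<in> lin R A" by (rule zero_mem_lin)
next
  fix x y assume "x \<in> lin R A" "y \<in> lin R A"
  then obtain F1 c1 F2 c2 where
    F1: "finite F1" "F1 \<subseteq> A" "\<forall>s\<in>F1. c1 s \<in> R" "x = (\<Sum>s\<in>F1. c1 s * s)" and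
    F2: "finite F2" "F2 \<subseteq> A" "\<forall>s\<in>F2. c2 s \<in> R" "y = (\<Sum>s\<in>F2. c2 s * s)"
    unfolding lin_def by blast
  define d1 where "d1 s = (if s \<in> F1 then c1 s else 0)" for s
  define d2 where "d2 s = (if s \<in> F2 then c2 s else 0)" for s
  have "x = (\<Sum>s\<in>F1 \<union> F2. d1 s * s)" "y = (\<Sum>s\<in>F1 \<union> F2. d2 s * s)"
    unfolding F1(4) F2(4) d1_def d2_def using F1(1) F2(1)
    by (auto intro: sum.mono_neutral_cong_left)
  then have "x + y = (\<Sum>s\<in>F1 \<union> F2. (d1 s + d2 s) * s)"
    by (simp add: sum.distrib distrib_right)
  moreover have "\<forall>s\<in>F1 \<union> F2. d1 s + d2 s \<in> R"
    using F1(3) F2(3) subringD(1,3)[OF R] unfolding d1_def d2_def by auto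
  ultimately show "x + y \<in> lin R A" unfolding lin_def using F1(1,2) F2(1,2)
    by (intro CollectI exI[of _ "F1 \<union> F2"] exI[of _ "\<lambda>s. d1 s + d2 s"]) auto
next
  fix r x assume r: "r \<in> R" and "x \<in> lin R A"
  then obtain F c where F: "finite F" "F \<subseteq> A" "\<forall>s\<in>F. c s \<in> R" "x = (\<Sum>s\<in>F. c s * s)"
    unfolding lin_def by blast
  have "r * x = (\<Sum>s\<in>F. (r * c s) * s)"
    unfolding F(4) by (simp add: sum_distrib_left mult.assoc)
  moreover have "\<forall>s\<in>F. r * c s \<in> R" using F(3) subringD(5)[OF R] r by auto
  ultimately show "r * x \<in> lin R A" unfolding lin_def using F(1,2)
    by (intro CollectI exI[of _ F] exI[of _ "\<lambda>s. r * c s"]) auto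
qed

lemma sum_mem_lin:
  assumes "subring R" "finite F" "\<And>c. c \<in> F \<Longrightarrow> k c \<in> R" "\<And>c. c \<in> F \<Longrightarrow> g c \<in> A"
  shows "(\<Sum>c\<in>F. k c * g c) \<in> lin R A"
  by (rule submod_sum[OF submod_lin[OF assms(1)] assms(2)]) (simp add: assms mult_mem_lin)

lemma mult_lin_mem:
  assumes "submod R X" "x \<in> lin R A" "\<And>a. a \<in> A \<Longrightarrow> c * a \<in> X"
  shows "c * x \<in> X"
  using lin_least[OF submod_mult_preimage[OF assms(1)], of A c] assms(2,3) by blast

lemma lin_lin:
  assumes "subring R" "subring R'" "R \<subseteq> R'"
  shows "lin R' (lin R A) = lin R' A"
proof
  show "lin R' (lin R A) \<subseteq> lin R' A"
    by (rule lin_least[OF submod_lin[OF assms(2)] lin_mono[OF order_refl assms(3)]])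
  show "lin R' A \<subseteq> lin R' (lin R A)"
    by (rule lin_mono[OF lin_superset[OF subringD(2)[OF assms(1)]] order_refl])
qed

lemma colon_lin:
  assumes "subring R"
  shows "colon R (lin R G) = colon R G"
proof
  show "colon R (lin R G) \<subseteq> colon R G"
    using lin_superset[OF subringD(2)[OF assms], of G] unfolding colon_def by blast
  show "colon R G \<subseteq> colon R (lin R G)"
    using mult_lin_mem[OF subring_submod[OF assms order_refl]] unfolding colon_def by blast
qed

lemma lin_scale_image:
  assumes R: "subring R" and b: "b \<noteq> 0"
  shows "(\<lambda>e. b * e) ` lin R G = lin R ((\<lambda>g. b * g) ` G)"
proof
  have G: "G \<subseteq> lin R G" "(\<lambda>g. b * g) ` G \<subseteq> lin R ((\<lambda>g. b * g) ` G)"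
    using lin_superset[OF subringD(2)[OF R]] by auto
  show "(\<lambda>e. b * e) ` lin R G \<subseteq> lin R ((\<lambda>g. b * g) ` G)"
    using mult_lin_mem[OF submod_lin[OF R]] G(2) by blast
  show "lin R ((\<lambda>g. b * g) ` G) \<subseteq> (\<lambda>e. b * e) ` lin R G"
  proof
    fix z assume "z \<in> lin R ((\<lambda>g. b * g) ` G)"
    then have "(1 / b) * z \<in> lin R G"
      by (rule mult_lin_mem[OF submod_lin[OF R]]) (use G(1) b in auto)
    moreover have "z = b * ((1 / b) * z)" using b by simp
    ultimately show "z \<in> (\<lambda>e. b * e) ` lin R G" by blast
  qed
qed

lemma fgen_iff:
  assumes "1 \<in> R"
  shows "F \<in> fgen R \<longleftrightarrow> (\<exists>G. finite G \<and> F = lin R G \<and> (\<exists>g\<in>G. g \<noteq> 0))"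
proof
  assume "F \<in> fgen R"
  then obtain G where G: "finite G" "F = lin R G" "F \<noteq> {0}" unfolding fgen_def by blast
  have "\<exists>g\<in>G. g \<noteq> 0"
  proof (rule ccontr)
    assume "\<not> (\<exists>g\<in>G. g \<noteq> 0)"
    then have "lin R G \<subseteq> {0}" by (intro lin_least) (auto simp: submod_def)
    then show False using G(2,3) zero_mem_lin by blast
  qed
  then show "\<exists>G. finite G \<and> F = lin R G \<and> (\<exists>g\<in>G. g \<noteq> 0)" using G by blast
next
  assume "\<exists>G. finite G \<and> F = lin R G \<and> (\<exists>g\<in>G. g \<noteq> 0)"
  then show "F \<in> fgen R" unfolding fgen_def using lin_superset[OF assms] by blast
qed

subsection \<open>Localizations\<close>

definition mult_subset :: "'a::field set \<Rightarrow> 'a set \<Rightarrow> bool" where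
  "mult_subset S R \<longleftrightarrow> S \<subseteq> R \<and> 1 \<in> S \<and> 0 \<notin> S \<and> (\<forall>x\<in>S. \<forall>y\<in>S. x * y \<in> S)"

lemma mult_subsetD:
  assumes "mult_subset S R"
  shows "S \<subseteq> R" "1 \<in> S" "0 \<notin> S" "x \<in> S \<Longrightarrow> y \<in> S \<Longrightarrow> x * y \<in> S"
  using assms unfolding mult_subset_def by auto

lemma mult_subset_mono: "mult_subset S R \<Longrightarrow> S \<subseteq> R' \<Longrightarrow> mult_subset S R'"
  unfolding mult_subset_def by blast

lemma mem_loc_iff:
  assumes "0 \<notin> S"
  shows "x \<in> loc A S \<longleftrightarrow> (\<exists>s\<in>S. s * x \<in> A)"
proof
  assume "x \<in> loc A S"
  then obtain a s where "a \<in> A" "s \<in> S" "x = a / s" unfolding loc_def by blast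
  then show "\<exists>s\<in>S. s * x \<in> A" using assms by (intro bexI[of _ s]) auto
next
  assume "\<exists>s\<in>S. s * x \<in> A"
  then obtain s where "s \<in> S" "s * x \<in> A" by blast
  moreover have "x = (s * x) / s" using \<open>s \<in> S\<close> assms by (metis nonzero_mult_div_cancel_left)
  ultimately show "x \<in> loc A S" unfolding loc_def by blast
qed

lemma subset_loc: "1 \<in> S \<Longrightarrow> A \<subseteq> loc A S"
  unfolding loc_def by force

lemma loc_mono: "A \<subseteq> B \<Longrightarrow> S \<subseteq> S' \<Longrightarrow> loc A S \<subseteq> loc B S'"
  unfolding loc_def by blast

lemma submod_loc:
  assumes S: "mult_subset S R" and J: "submod R J"
  shows "submod (loc R S) (loc J S)"
  unfolding submod_def
proof (intro conjI ballI)
  note mem = mem_loc_iff[OF mult_subsetD(3)[OF S]]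
  have SR: "s \<in> S \<Longrightarrow> s \<in> R" for s using mult_subsetD(1)[OF S] by blast
  show "0 \<in> loc J S" using J subset_loc[OF mult_subsetD(2)[OF S]] unfolding submod_def by blast
  fix y z assume "y \<in> loc J S" "z \<in> loc J S"
  then obtain s t where st: "s \<in> S" "s * y \<in> J" "t \<in> S" "t * z \<in> J" unfolding mem by blast
  have "(s * t) * (y + z) = t * (s * y) + s * (t * z)" by (simp add: algebra_simps)
  moreover have "t * (s * y) + s * (t * z) \<in> J" using st SR J unfolding submod_def by simp
  ultimately show "y + z \<in> loc J S" unfolding mem using mult_subsetD(4)[OF S st(1) st(3)] by metis
next
  note mem = mem_loc_iff[OF mult_subsetD(3)[OF S]]
  fix r y assume "r \<in> loc R S" "y \<in> loc J S"
  then obtain u s where us: "u \<in> S" "u * r \<in> R" "s \<in> S" "s * y \<in> J" unfolding mem by blast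
  have "(u * s) * (r * y) = (u * r) * (s * y)" by (simp add: algebra_simps)
  moreover have "(u * r) * (s * y) \<in> J" using us J unfolding submod_def by simp
  ultimately show "r * y \<in> loc J S" unfolding mem using mult_subsetD(4)[OF S us(1) us(3)] by metis
qed

lemma subring_loc:
  assumes R: "subring R" and S: "mult_subset S R"
  shows "subring (loc R S)"
proof -
  have M: "submod (loc R S) (loc R S)" by (rule submod_loc[OF S subring_submod[OF R order_refl]])
  have RL: "R \<subseteq> loc R S" by (rule subset_loc[OF mult_subsetD(2)[OF S]])
  have "x - y \<in> loc R S" if "x \<in> loc R S" "y \<in> loc R S" for x y
  proof -
    have "- 1 * y \<in> loc R S" using M that(2) RL subring_uminus[OF R subringD(2)[OF R]]
      unfolding submod_def by blast
    then show ?thesis using M that(1) unfolding submod_def by force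
  qed
  moreover have "0 \<in> loc R S" "1 \<in> loc R S" using RL subringD(1,2)[OF R] by auto
  ultimately show ?thesis using M unfolding subring_def submod_def by blast
qed

lemma lin_loc_subset_loc:
  assumes "mult_subset S R" "submod R J" "A \<subseteq> loc J S"
  shows "lin (loc R S) A \<subseteq> loc J S"
  by (rule lin_least[OF submod_loc[OF assms(1,2)] assms(3)])

lemma lin_loc_eq_loc:
  assumes R: "subring R" and S: "mult_subset S R" and E: "E \<subseteq> R" and s: "s \<in> S" "s \<in> E"
  shows "lin (loc R S) E = loc R S"
proof
  have L: "subring (loc R S)" by (rule subring_loc[OF R S])
  have RL: "R \<subseteq> loc R S" by (rule subset_loc[OF mult_subsetD(2)[OF S]])
  show "lin (loc R S) E \<subseteq> loc R S"
    by (rule lin_least[OF subring_submod[OF L order_refl]]) (use E RL in blast)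
  show "loc R S \<subseteq> lin (loc R S) E"
  proof
    fix y assume y: "y \<in> loc R S"
    have s0: "s \<noteq> 0" using s(1) mult_subsetD(3)[OF S] by blast
    have "1 / s \<in> loc R S"
      unfolding mem_loc_iff[OF mult_subsetD(3)[OF S]] using s0 s(1) subringD(2)[OF R] by force
    then have "y * (1 / s) \<in> loc R S" using subringD(5)[OF L y] by blast
    then have "(y * (1 / s)) * s \<in> lin (loc R S) E" using s(2) by (rule mult_mem_lin)
    then show "y \<in> lin (loc R S) E" using s0 by simp
  qed
qed

lemma common_denominator:
  assumes R: "subring R" and S: "mult_subset S R" and X: "finite X" "X \<subseteq> loc R S"
  shows "\<exists>s\<in>S. \<forall>x\<in>X. s * x \<in> R"
  using X
proof (induction X rule: finite_induct)
  case empty then show ?case using mult_subsetD(2)[OF S] by blast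
next
  case (insert x X)
  then obtain s where s: "s \<in> S" "\<forall>y\<in>X. s * y \<in> R" by blast
  obtain t where t: "t \<in> S" "t * x \<in> R"
    using insert.prems mem_loc_iff[OF mult_subsetD(3)[OF S]] by blast
  have "s \<in> R" "t \<in> R" using s(1) t(1) mult_subsetD(1)[OF S] by auto
  have "(s * t) * x \<in> R"
    using subringD(5)[OF R \<open>s \<in> R\<close> t(2)] by (simp add: mult.assoc)
  moreover have "(s * t) * y \<in> R" if "y \<in> X" for y
    using subringD(5)[OF R \<open>t \<in> R\<close> s(2)[rule_format, OF that]] by (simp add: ac_simps)
  ultimately have "\<forall>y\<in>insert x X. (s * t) * y \<in> R" by blast
  then show ?case using mult_subsetD(4)[OF S s(1) t(1)] by blast
qed

subsection \<open>Ideals\<close>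

lemma idealD:
  assumes "ideal_of R I"
  shows "I \<subseteq> R" "0 \<in> I" "x \<in> I \<Longrightarrow> y \<in> I \<Longrightarrow> x + y \<in> I" "r \<in> R \<Longrightarrow> x \<in> I \<Longrightarrow> r * x \<in> I"
  using assms unfolding ideal_of_def submod_def by auto

lemma ideal_eq_if_one_mem:
  assumes "ideal_of R I" "1 \<in> I"
  shows "I = R"
proof
  show "R \<subseteq> I" using idealD(4)[OF assms(1) _ assms(2)] by fastforce
qed (rule idealD(1)[OF assms(1)])

lemma prime_idealD:
  assumes "prime_ideal_of R P"
  shows "ideal_of R P" "1 \<notin> P" "0 \<in> P" "P \<subseteq> R"
    "a \<in> R \<Longrightarrow> b \<in> R \<Longrightarrow> a * b \<in> P \<Longrightarrow> a \<in> P \<or> b \<in> P"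
  using assms ideal_eq_if_one_mem[of R P] idealD[of R P] unfolding prime_ideal_of_def by auto

lemma mult_subset_diff_prime:
  assumes D: "subring D" and DR: "D \<subseteq> R" and Q: "prime_ideal_of R Q"
  shows "mult_subset (D - Q) R"
  unfolding mult_subset_def
proof (intro conjI ballI)
  show "D - Q \<subseteq> R" "1 \<in> D - Q" "0 \<notin> D - Q"
    using DR subringD(2)[OF D] prime_idealD(2,3)[OF Q] by auto
  fix x y assume "x \<in> D - Q" "y \<in> D - Q"
  then show "x * y \<in> D - Q" using subringD(5)[OF D] prime_idealD(5)[OF Q] DR by blast
qed

lemma ideal_contraction:
  assumes D: "subring D" and DT: "D \<subseteq> T" and J: "ideal_of T J"
  shows "ideal_of D (J \<inter> D)"
  unfolding ideal_of_def submod_def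
proof (intro conjI ballI)
  show "J \<inter> D \<subseteq> D" "0 \<in> J \<inter> D" using idealD(2)[OF J] subringD(1)[OF D] by auto
  show "x + y \<in> J \<inter> D" if "x \<in> J \<inter> D" "y \<in> J \<inter> D" for x y
    using that idealD(3)[OF J] subringD(3)[OF D] by blast
  show "r * x \<in> J \<inter> D" if "r \<in> D" "x \<in> J \<inter> D" for r x
    using that idealD(4)[OF J] subringD(5)[OF D] DT by blast
qed

lemma prime_ideal_contraction:
  assumes D: "subring D" and DT: "D \<subseteq> T" and Q: "prime_ideal_of T Q"
  shows "prime_ideal_of D (Q \<inter> D)"
  unfolding prime_ideal_of_def
proof (intro conjI ballI impI)
  show "ideal_of D (Q \<inter> D)" by (rule ideal_contraction[OF D DT prime_idealD(1)[OF Q]])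
  show "Q \<inter> D \<noteq> D" using prime_idealD(2)[OF Q] subringD(2)[OF D] by blast
  show "a \<in> Q \<inter> D \<or> b \<in> Q \<inter> D" if "a \<in> D" "b \<in> D" "a * b \<in> Q \<inter> D" for a b
    using that prime_idealD(5)[OF Q, of a b] DT by blast
qed

lemma ideal_Union_chain:
  assumes C: "C \<noteq> {}" "chain\<^sub>\<subseteq> C" and ideals: "\<And>J. J \<in> C \<Longrightarrow> ideal_of R J"
  shows "ideal_of R (\<Union>C)"
  unfolding ideal_of_def submod_def
proof (intro conjI ballI)
  show "\<Union>C \<subseteq> R" using idealD(1)[OF ideals] by blast
  show "0 \<in> \<Union>C" using C(1) idealD(2)[OF ideals] by blast
  show "r * x \<in> \<Union>C" if "r \<in> R" "x \<in> \<Union>C" for r x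
    using that idealD(4)[OF ideals] by blast
  fix x y assume "x \<in> \<Union>C" "y \<in> \<Union>C"
  then obtain J1 J2 where J: "J1 \<in> C" "J2 \<in> C" "x \<in> J1" "y \<in> J2" by blast
  then have "J1 \<subseteq> J2 \<or> J2 \<subseteq> J1" using C(2) unfolding chain_subset_def by blast
  then show "x + y \<in> \<Union>C"
  proof
    assume "J1 \<subseteq> J2"
    then show ?thesis using idealD(3)[OF ideals[OF J(2)]] J by blast
  next
    assume "J2 \<subseteq> J1"
    then show ?thesis using idealD(3)[OF ideals[OF J(1)]] J by blast
  qed
qed

lemma subset_Zorn_above:
  assumes "I \<in> A" and "\<And>C. C \<noteq> {} \<Longrightarrow> C \<subseteq> A \<Longrightarrow> chain\<^sub>\<subseteq> C \<Longrightarrow> \<Union>C \<in> A"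
  shows "\<exists>M\<in>A. I \<subseteq> M \<and> (\<forall>X\<in>A. M \<subseteq> X \<longrightarrow> X = M)"
proof -
  let ?B = "{J\<in>A. I \<subseteq> J}"
  have "\<exists>M\<in>?B. \<forall>X\<in>?B. M \<subseteq> X \<longrightarrow> X = M"
  proof (rule subset_Zorn_nonempty)
    show "?B \<noteq> {}" using assms(1) by blast
    fix C assume C: "C \<noteq> {}" "subset.chain ?B C"
    then have CB: "C \<subseteq> ?B" and "chain\<^sub>\<subseteq> C"
      unfolding subset_chain_def chain_subset_def by simp_all
    then have "\<Union>C \<in> A" using assms(2) C(1) by auto
    moreover obtain K where "K \<in> C" using C(1) by blast
    then have "I \<subseteq> \<Union>C" using CB by blast
    ultimately show "\<Union>C \<in> ?B" by simp
  qed
  then obtain M where M: "M \<in> A" "I \<subseteq> M" and max: "\<forall>X\<in>?B. M \<subseteq> X \<longrightarrow> X = M"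
    by auto
  have "X = M" if "X \<in> A" "M \<subseteq> X" for X
    using max that order_trans[OF M(2) that(2)] by blast
  then show ?thesis using M by blast
qed

lemma ideal_add_multiples:
  assumes R: "subring R" and J: "ideal_of R J" and a: "a \<in> R"
  defines "E \<equiv> {j + a * r | j r. j \<in> J \<and> r \<in> R}"
  shows "ideal_of R E" "J \<subseteq> E" "a \<in> E"
proof -
  have memE: "z \<in> E \<longleftrightarrow> (\<exists>j\<in>J. \<exists>r\<in>R. z = j + a * r)" for z unfolding E_def by blast
  show "ideal_of R E" unfolding ideal_of_def submod_def
  proof (intro conjI ballI subsetI)
    fix z assume "z \<in> E"
    then obtain j r where jr: "j \<in> J" "r \<in> R" "z = j + a * r" unfolding memE by blast
    then have "j \<in> R" using idealD(1)[OF J] by blast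
    then show "z \<in> R" using subringD(3)[OF R _ subringD(5)[OF R a jr(2)]] jr(3) by simp
  next
    show "0 \<in> E" unfolding memE using idealD(2)[OF J] subringD(1)[OF R] by (intro bexI[of _ 0]) auto
  next
    fix x y assume "x \<in> E" "y \<in> E"
    then obtain j1 r1 j2 r2 where jr: "x = j1 + a * r1" "y = j2 + a * r2" "j1 \<in> J" "j2 \<in> J" "r1 \<in> R" "r2 \<in> R"
      unfolding memE by blast
    have "x + y = (j1 + j2) + a * (r1 + r2)" using jr by (simp add: algebra_simps)
    moreover have "j1 + j2 \<in> J" "r1 + r2 \<in> R" using jr idealD(3)[OF J] subringD(3)[OF R] by auto
    ultimately show "x + y \<in> E" unfolding memE by blast
  next
    fix t x assume t: "t \<in> R" and "x \<in> E"
    then obtain j r where jr: "x = j + a * r" "j \<in> J" "r \<in> R" unfolding memE by blast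
    have "t * x = t * j + a * (t * r)" using jr by (simp add: algebra_simps)
    moreover have "t * j \<in> J" "t * r \<in> R" using jr idealD(4)[OF J] t subringD(5)[OF R] by auto
    ultimately show "t * x \<in> E" unfolding memE by blast
  qed
  show "J \<subseteq> E"
  proof
    fix x assume "x \<in> J"
    moreover have "x = x + a * 0" by simp
    ultimately show "x \<in> E" unfolding memE using subringD(1)[OF R] by blast
  qed
  have "a = 0 + a * 1" by simp
  then show "a \<in> E" unfolding memE using idealD(2)[OF J] subringD(2)[OF R] by blast
qed

lemma prime_idealI_extensions_meet:
  assumes R: "subring R" and Q: "ideal_of R Q" and S: "mult_subset S R" and QS: "Q \<inter> S = {}"
    and ext: "\<And>x. x \<in> R \<Longrightarrow> x \<notin> Q \<Longrightarrow> \<exists>q\<in>Q. \<exists>r\<in>R. q + x * r \<in> S"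
  shows "prime_ideal_of R Q"
proof -
  have "a \<in> Q \<or> b \<in> Q" if ab: "a \<in> R" "b \<in> R" "a * b \<in> Q" for a b
  proof (rule ccontr)
    assume "\<not> (a \<in> Q \<or> b \<in> Q)"
    then obtain q1 t1 q2 t2 where q: "q1 \<in> Q" "t1 \<in> R" "q1 + a * t1 \<in> S" "q2 \<in> Q" "t2 \<in> R" "q2 + b * t2 \<in> S"
      using ext[OF ab(1)] ext[OF ab(2)] by blast
    have "(q1 + a * t1) * (q2 + b * t2) = (q2 + b * t2) * q1 + (a * t1) * q2 + (t1 * t2) * (a * b)"
      by (simp add: algebra_simps)
    moreover have "q2 + b * t2 \<in> R" "a * t1 \<in> R" "t1 * t2 \<in> R"
      using q(6) mult_subsetD(1)[OF S] subringD(5)[OF R] ab q(2,5) by auto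
    then have "(q2 + b * t2) * q1 + (a * t1) * q2 + (t1 * t2) * (a * b) \<in> Q"
      using q(1,4) ab(3) idealD(3,4)[OF Q] by simp
    moreover have "(q1 + a * t1) * (q2 + b * t2) \<in> S" using mult_subsetD(4)[OF S q(3,6)] .
    ultimately show False using QS by auto
  qed
  moreover have "Q \<noteq> R" using QS mult_subsetD(1,2)[OF S] by blast
  ultimately show ?thesis unfolding prime_ideal_of_def using Q by simp
qed

lemma prime_ideal_avoiding:
  assumes R: "subring R" and J: "ideal_of R J" and S: "mult_subset S R" and JS: "J \<inter> S = {}"
  obtains Q where "prime_ideal_of R Q" "J \<subseteq> Q" "Q \<inter> S = {}"
proof -
  define A where "A = {K. ideal_of R K \<and> K \<inter> S = {}}"
  have "J \<in> A" using J JS unfolding A_def by simp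
  moreover have "\<Union>C \<in> A" if "C \<noteq> {}" "C \<subseteq> A" "chain\<^sub>\<subseteq> C" for C
    using ideal_Union_chain[OF that(1,3)] that(2) unfolding A_def by blast
  ultimately obtain Q where QA: "Q \<in> A" "J \<subseteq> Q" and max: "\<forall>X\<in>A. Q \<subseteq> X \<longrightarrow> X = Q"
    using subset_Zorn_above[of J A] by blast
  have Q: "ideal_of R Q" "Q \<inter> S = {}" using QA(1) unfolding A_def by auto
  have "prime_ideal_of R Q"
  proof (rule prime_idealI_extensions_meet[OF R Q(1) S Q(2)])
    fix x assume x: "x \<in> R" "x \<notin> Q"
    note E = ideal_add_multiples[OF R Q(1) x(1)]
    then have "{j + x * r | j r. j \<in> Q \<and> r \<in> R} \<notin> A" using max x(2) by blast
    then show "\<exists>q\<in>Q. \<exists>r\<in>R. q + x * r \<in> S" using E(1) unfolding A_def by blast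
  qed
  then show ?thesis using that Q QA(2) by blast
qed

lemma ideal_conductor:
  assumes T: "subring T"
  shows "ideal_of T {t\<in>T. t * x \<in> T}"
  unfolding ideal_of_def submod_def
proof (intro conjI ballI subsetI)
  show "0 \<in> {t\<in>T. t * x \<in> T}" using subringD(1)[OF T] by simp
  show "a + b \<in> {t\<in>T. t * x \<in> T}" if "a \<in> {t\<in>T. t * x \<in> T}" "b \<in> {t\<in>T. t * x \<in> T}" for a b
    using that subringD(3)[OF T] by (simp add: distrib_right)
  show "r * a \<in> {t\<in>T. t * x \<in> T}" if "r \<in> T" "a \<in> {t\<in>T. t * x \<in> T}" for r a
    using that subringD(5)[OF T] by (simp add: mult.assoc)
qed simp

lemma loc_eq_loc_iff_subset:
  assumes D: "subring D" and T: "subring T" and DT: "D \<subseteq> T" and Q: "prime_ideal_of T Q"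
  shows "loc D (D - Q) = loc T (T - Q) \<longleftrightarrow> T \<subseteq> loc D (D - Q)"
proof
  assume "loc D (D - Q) = loc T (T - Q)"
  then show "T \<subseteq> loc D (D - Q)"
    using subset_loc[of "T - Q" T] prime_idealD(2)[OF Q] subringD(2)[OF T] by auto
next
  assume TL: "T \<subseteq> loc D (D - Q)"
  have S: "mult_subset (D - Q) D" by (rule mult_subset_mono[OF mult_subset_diff_prime[OF D DT Q]]) blast
  note memD = mem_loc_iff[OF mult_subsetD(3)[OF S]]
  note memT = mem_loc_iff[OF mult_subsetD(3)[OF mult_subset_diff_prime[OF T order_refl Q]]]
  show "loc D (D - Q) = loc T (T - Q)"
  proof
    show "loc D (D - Q) \<subseteq> loc T (T - Q)" by (rule loc_mono) (use DT in auto)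
    show "loc T (T - Q) \<subseteq> loc D (D - Q)"
    proof
      fix x assume "x \<in> loc T (T - Q)"
      then obtain u where u: "u \<in> T - Q" "u * x \<in> T" unfolding memT by blast
      have "u * x \<in> loc D (D - Q)" "u \<in> loc D (D - Q)" using TL u by auto
      then obtain s s' where s: "s \<in> D - Q" "s * (u * x) \<in> D" and s': "s' \<in> D - Q" "s' * u \<in> D"
        unfolding memD by blast
      have "s' * u \<notin> Q" using prime_idealD(5)[OF Q, of s' u] s'(1) u(1) DT by auto
      then have "s * (s' * u) \<in> D - Q" using mult_subsetD(4)[OF S s(1)] s'(2) by blast
      moreover have "(s * (s' * u)) * x \<in> D"
      proof -
        have "(s * (s' * u)) * x = s' * (s * (u * x))" by (simp add: algebra_simps)
        also have "\<dots> \<in> D" using subringD(5)[OF D _ s(2)] s'(1) by blast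
        finally show ?thesis .
      qed
      ultimately show "x \<in> loc D (D - Q)" unfolding memD by blast
    qed
  qed
qed

lemma mem_loc_if_lin_conductor:
  assumes Q: "submod T Q" and s: "s \<in> lin T {d\<in>D. d * x \<in> D}" "s \<notin> Q"
  shows "x \<in> loc D (D - Q)"
proof -
  have "\<not> {d\<in>D. d * x \<in> D} \<subseteq> Q"
  proof
    assume "{d\<in>D. d * x \<in> D} \<subseteq> Q"
    then have "lin T {d\<in>D. d * x \<in> D} \<subseteq> Q" by (rule lin_least[OF Q])
    then show False using s by blast
  qed
  then obtain d where "d \<in> D - Q" "d * x \<in> D" by blast
  moreover have "0 \<notin> D - Q" using Q unfolding submod_def by blast
  ultimately show ?thesis unfolding mem_loc_iff[OF \<open>0 \<notin> D - Q\<close>] by blast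
qed

subsection \<open>The equational criterion for flatness\<close>

lemma flat_module_one_mem_lin_conductor:
  assumes R: "subring R" and den: "\<exists>b\<in>R. b \<noteq> 0 \<and> b * x \<in> R"
    and M: "subring M" and flat: "flat_module R M" and x: "x \<in> M"
  shows "1 \<in> lin M {d\<in>R. d * x \<in> R}"
proof -
  obtain b where b: "b \<in> R" "b \<noteq> 0" "b * x \<in> R" using den by blast
  \<comment> \<open>apply flatness to the relation \<open>b * x + (- (b * x)) * 1 = 0\<close>\<close>
  define r where "r i = (if i = 0 then b else - (b * x))" for i :: nat
  define xs where "xs i = (if i = 0 then x else 1)" for i :: nat
  have "\<forall>i<2. r i \<in> R \<and> xs i \<in> M"
    using b subring_uminus[OF R] x subringD(2)[OF M] unfolding r_def xs_def by auto
  moreover have "(\<Sum>i<2. r i * xs i) = 0"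
    unfolding r_def xs_def by (simp add: numeral_2_eq_2)
  ultimately obtain m :: nat and a :: "nat \<Rightarrow> nat \<Rightarrow> 'a" and y :: "nat \<Rightarrow> 'a"
    where y: "\<forall>j<m. y j \<in> M" and a: "\<forall>i<2. \<forall>j<m. a i j \<in> R"
      and xs: "\<forall>i<2. xs i = (\<Sum>j<m. a i j * y j)" and rel: "\<forall>j<m. (\<Sum>i<2. r i * a i j) = 0"
    using flat[unfolded flat_module_def, rule_format, of 2 r xs] by blast
  have "a 1 j \<in> {d\<in>R. d * x \<in> R}" if j: "j < m" for j
  proof -
    have "b * (a 0 j - x * a 1 j) = 0"
      using rel j unfolding r_def by (simp add: numeral_2_eq_2 algebra_simps)
    then have "a 1 j * x = a 0 j" using b(2) by (simp add: algebra_simps)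
    then show ?thesis using a j by auto
  qed
  then have "(\<Sum>j<m. y j * a 1 j) \<in> lin M {d\<in>R. d * x \<in> R}"
    using y by (intro sum_mem_lin[OF M]) auto
  moreover have "1 = (\<Sum>j<m. a 1 j * y j)" using xs[rule_format, of 1] unfolding xs_def by simp
  ultimately show ?thesis by (simp add: mult.commute)
qed

lemma flat_moduleI_conductor:
  assumes M: "subring M"
    and one: "\<And>X. finite X \<Longrightarrow> X \<subseteq> M \<Longrightarrow> 1 \<in> lin M {d\<in>R. \<forall>x\<in>X. d * x \<in> R}"
  shows "flat_module R M"
  unfolding flat_module_def
proof (intro allI impI)
  fix n and r xs :: "nat \<Rightarrow> 'a"
  assume rel: "(\<forall>i<n. r i \<in> R \<and> xs i \<in> M) \<and> (\<Sum>i<n. r i * xs i) = 0"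
  have "1 \<in> lin M {d\<in>R. \<forall>x\<in>xs ` {..<n}. d * x \<in> R}" using rel by (intro one) auto
  then obtain F e where F: "finite F" "F \<subseteq> {d\<in>R. \<forall>x\<in>xs ` {..<n}. d * x \<in> R}" "\<forall>c\<in>F. e c \<in> M"
    "1 = (\<Sum>c\<in>F. e c * c)" unfolding lin_def by blast
  obtain h where h: "bij_betw h {..<card F} F"
    using ex_bij_betw_nat_finite[OF F(1)] by (auto simp: atLeast0LessThan)
  define m where "m = card F"
  have hF: "j < m \<Longrightarrow> h j \<in> F" for j using h unfolding m_def bij_betw_def by auto
  have sumF: "(\<Sum>j<m. g (h j)) = (\<Sum>c\<in>F. g c)" for g :: "'a \<Rightarrow> 'a"
    using sum.reindex_bij_betw[OF h, of g] unfolding m_def .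
  \<comment> \<open>Since \<open>\<Sum>\<^sub>c e c * c = 1\<close>, \<open>xs i = \<Sum>\<^sub>c (c * xs i) * e c\<close> with coefficients in R, and
      each column \<open>(c * xs i)\<^sub>i\<close> is a multiple of the given relation.\<close>
  show "\<exists>m (a::nat \<Rightarrow> nat \<Rightarrow> 'a) (y::nat \<Rightarrow> 'a). (\<forall>j<m. y j \<in> M) \<and> (\<forall>i<n. \<forall>j<m. a i j \<in> R) \<and>
          (\<forall>i<n. xs i = (\<Sum>j<m. a i j * y j)) \<and> (\<forall>j<m. (\<Sum>i<n. r i * a i j) = 0)"
  proof (intro exI[of _ m] exI[of _ "\<lambda>i j. h j * xs i"] exI[of _ "\<lambda>j. e (h j)"] conjI allI impI)
    show "e (h j) \<in> M" if "j < m" for j using hF[OF that] F(3) by blast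
    show "h j * xs i \<in> R" if "i < n" "j < m" for i j using hF[OF that(2)] F(2) that(1) by blast
    show "xs i = (\<Sum>j<m. h j * xs i * e (h j))" if "i < n" for i
    proof -
      have "(\<Sum>j<m. h j * xs i * e (h j)) = xs i * (\<Sum>j<m. e (h j) * h j)"
        by (simp add: sum_distrib_left algebra_simps)
      also have "\<dots> = xs i" using sumF[of "\<lambda>c. e c * c"] F(4) by simp
      finally show ?thesis by simp
    qed
    show "(\<Sum>i<n. r i * (h j * xs i)) = 0" if "j < m" for j
    proof -
      have "(\<Sum>i<n. r i * (h j * xs i)) = h j * (\<Sum>i<n. r i * xs i)"
        by (simp add: sum_distrib_left algebra_simps)
      then show ?thesis using rel by simp
    qed
  qed
qed

subsection \<open>Semistar operations and quasi-prime ideals\<close>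

locale semistar_domain =
  fixes D :: "'a::field set" and st :: "'a set \<Rightarrow> 'a set"
  assumes D: "subring D" and semistar: "semistar D st"
begin

lemma one_mem_D: "1 \<in> D"
  by (rule subringD(2)[OF D])

lemma D_Fbar: "D \<in> Fbar D"
  unfolding Fbar_def using subring_submod[OF D order_refl] one_mem_D by auto

lemma fgen_Fbar: "F \<in> fgen D \<Longrightarrow> F \<in> Fbar D"
  unfolding fgen_def Fbar_def using submod_lin[OF D] by auto

lemma st_Fbar: "E \<in> Fbar D \<Longrightarrow> st E \<in> Fbar D"
  and st_extensive: "E \<in> Fbar D \<Longrightarrow> E \<subseteq> st E"
  and st_idem: "E \<in> Fbar D \<Longrightarrow> st (st E) = st E"
  and st_mono: "E \<in> Fbar D \<Longrightarrow> F \<in> Fbar D \<Longrightarrow> E \<subseteq> F \<Longrightarrow> st E \<subseteq> st F"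
  and st_scale: "x \<noteq> 0 \<Longrightarrow> E \<in> Fbar D \<Longrightarrow> st ((\<lambda>e. x * e) ` E) = (\<lambda>e. x * e) ` st E"
  using semistar unfolding semistar_def by auto

lemma submod_st: "E \<in> Fbar D \<Longrightarrow> submod D (st E)"
  using st_Fbar unfolding Fbar_def by blast

lemma one_mem_st_D: "1 \<in> st D"
  using st_extensive[OF D_Fbar] one_mem_D by blast

lemma fgen_lin: "finite G \<Longrightarrow> g \<in> G \<Longrightarrow> g \<noteq> 0 \<Longrightarrow> lin D G \<in> fgen D"
  using fgen_iff[OF one_mem_D] by blast

lemma mem_starf_iff: "x \<in> starf D st A \<longleftrightarrow> (\<exists>F\<in>fgen D. F \<subseteq> A \<and> x \<in> st F)"
  unfolding starf_def by blast

lemma st_subset_starf: "F \<in> fgen D \<Longrightarrow> F \<subseteq> A \<Longrightarrow> st F \<subseteq> starf D st A"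
  unfolding starf_def by blast

lemma starf_mono: "A \<subseteq> B \<Longrightarrow> starf D st A \<subseteq> starf D st B"
  unfolding starf_def by blast

lemma starf_subset_st_D:
  assumes "A \<subseteq> D"
  shows "starf D st A \<subseteq> st D"
proof
  fix x assume "x \<in> starf D st A"
  then obtain F where "F \<in> fgen D" "F \<subseteq> A" "x \<in> st F" unfolding mem_starf_iff by blast
  then show "x \<in> st D" using st_mono[OF fgen_Fbar D_Fbar] assms by blast
qed

lemma starf_eq_st_D_iff:
  assumes "A \<subseteq> D"
  shows "starf D st A = st D \<longleftrightarrow> 1 \<in> starf D st A"
proof
  assume "1 \<in> starf D st A"
  then obtain F where F: "F \<in> fgen D" "F \<subseteq> A" "1 \<in> st F" unfolding mem_starf_iff by blast
  have FB: "F \<in> Fbar D" by (rule fgen_Fbar[OF F(1)])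
  have "d \<in> st F" if "d \<in> D" for d
    using submod_st[OF FB] F(3) that unfolding submod_def by (metis mult.right_neutral)
  then have "st D \<subseteq> st (st F)" by (intro st_mono[OF D_Fbar st_Fbar[OF FB]]) blast
  then have "st D \<subseteq> starf D st A" using st_idem[OF FB] st_subset_starf[OF F(1,2)] by simp
  then show "starf D st A = st D" using starf_subset_st_D[OF assms] by (rule antisym[rotated])
qed (use one_mem_st_D in simp)

lemma subset_starf:
  assumes A: "submod D A" and a0: "a0 \<in> A" "a0 \<noteq> 0"
  shows "A \<subseteq> starf D st A"
proof
  fix a assume a: "a \<in> A"
  have F: "lin D {a, a0} \<in> fgen D" by (rule fgen_lin[of _ a0]) (use a0 in auto)
  have "lin D {a, a0} \<subseteq> A" by (rule lin_least[OF A]) (use a a0 in auto)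
  moreover have "a \<in> st (lin D {a, a0})"
    using lin_superset[OF one_mem_D, of "{a, a0}"] st_extensive[OF fgen_Fbar[OF F]] by blast
  ultimately show "a \<in> starf D st A" unfolding mem_starf_iff using F by blast
qed

lemma fgen_join:
  assumes A: "submod D A" and F1: "F1 \<in> fgen D" "F1 \<subseteq> A" and F2: "F2 \<in> fgen D" "F2 \<subseteq> A"
  obtains F where "F \<in> fgen D" "F \<subseteq> A" "F1 \<subseteq> F" "F2 \<subseteq> F"
proof -
  obtain G1 g where G1: "finite G1" "F1 = lin D G1" "g \<in> G1" "g \<noteq> 0"
    using F1(1) unfolding fgen_iff[OF one_mem_D] by blast
  obtain G2 where G2: "finite G2" "F2 = lin D G2" using F2(1) unfolding fgen_def by blast
  have "lin D (G1 \<union> G2) \<in> fgen D" using G1 G2(1) by (intro fgen_lin[of _ g]) auto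
  moreover have "G1 \<union> G2 \<subseteq> A"
    using lin_superset[OF one_mem_D, of G1] lin_superset[OF one_mem_D, of G2] G1(2) G2(2) F1(2) F2(2)
    by blast
  then have "lin D (G1 \<union> G2) \<subseteq> A" by (rule lin_least[OF A])
  moreover have "F1 \<subseteq> lin D (G1 \<union> G2)" "F2 \<subseteq> lin D (G1 \<union> G2)"
    unfolding G1(2) G2(2) by (rule lin_mono, blast, rule order_refl)+
  ultimately show ?thesis using that by blast
qed

lemma fgen_cover:
  assumes A: "submod D A" and a0: "a0 \<in> A" "a0 \<noteq> 0" and G: "finite G" "G \<subseteq> starf D st A"
  shows "\<exists>F\<in>fgen D. F \<subseteq> A \<and> G \<subseteq> st F"
  using G
proof (induction G rule: finite_induct)
  case empty
  have "lin D {a0} \<in> fgen D" "lin D {a0} \<subseteq> A" using fgen_lin[of "{a0}" a0] a0 lin_least[OF A] by auto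
  then show ?case by blast
next
  case (insert g G)
  then have "G \<subseteq> starf D st A" "g \<in> starf D st A" by simp_all
  from insert.IH[OF this(1)] obtain F1 where F1: "F1 \<in> fgen D" "F1 \<subseteq> A \<and> G \<subseteq> st F1" ..
  from \<open>g \<in> starf D st A\<close> obtain F2 where F2: "F2 \<in> fgen D" "F2 \<subseteq> A \<and> g \<in> st F2"
    unfolding mem_starf_iff ..
  obtain F where F: "F \<in> fgen D" "F \<subseteq> A" "F1 \<subseteq> F" "F2 \<subseteq> F"
    using fgen_join[OF A F1(1) conjunct1[OF F1(2)] F2(1) conjunct1[OF F2(2)]] by blast
  have "st F1 \<subseteq> st F" "st F2 \<subseteq> st F"
    using st_mono[OF fgen_Fbar[OF F1(1)] fgen_Fbar[OF F(1)] F(3)]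
      st_mono[OF fgen_Fbar[OF F2(1)] fgen_Fbar[OF F(1)] F(4)] .
  then have "insert g G \<subseteq> st F" using F1(2) F2(2) by auto
  then show ?case using F(1,2) by blast
qed

lemma st_subset_starf_if_subset_starf:
  assumes A: "submod D A" and a0: "a0 \<in> A" "a0 \<noteq> 0" and F: "F \<in> fgen D" "F \<subseteq> starf D st A"
  shows "st F \<subseteq> starf D st A"
proof -
  obtain G where G: "finite G" "F = lin D G" using F(1) unfolding fgen_def by blast
  have "G \<subseteq> starf D st A" using lin_superset[OF one_mem_D, of G] G(2) F(2) by blast
  then obtain F' where F': "F' \<in> fgen D" "F' \<subseteq> A" "G \<subseteq> st F'" using fgen_cover[OF A a0 G(1)] by blast
  have F'B: "F' \<in> Fbar D" by (rule fgen_Fbar[OF F'(1)])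
  have "F \<subseteq> st F'" unfolding G(2) by (rule lin_least[OF submod_st[OF F'B] F'(3)])
  then have "st F \<subseteq> st (st F')" by (rule st_mono[OF fgen_Fbar[OF F(1)] st_Fbar[OF F'B]])
  also have "\<dots> = st F'" by (rule st_idem[OF F'B])
  also have "\<dots> \<subseteq> starf D st A" by (rule st_subset_starf[OF F'(1,2)])
  finally show ?thesis .
qed

lemma starf_starf_subset:
  assumes "submod D A" "a0 \<in> A" "a0 \<noteq> 0"
  shows "starf D st (starf D st A) \<subseteq> starf D st A"
proof
  fix x assume "x \<in> starf D st (starf D st A)"
  then obtain F where "F \<in> fgen D" "F \<subseteq> starf D st A" "x \<in> st F" unfolding mem_starf_iff by blast
  then show "x \<in> starf D st A" using st_subset_starf_if_subset_starf[OF assms] by blast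
qed

lemma submod_starf:
  assumes A: "submod D A" and a0: "a0 \<in> A" "a0 \<noteq> 0"
  shows "submod D (starf D st A)"
  unfolding submod_def
proof (intro conjI ballI)
  show "0 \<in> starf D st A" using subset_starf[OF A a0] A unfolding submod_def by blast
  fix x y assume "x \<in> starf D st A" "y \<in> starf D st A"
  then obtain F where F: "F \<in> fgen D" "F \<subseteq> A" "{x, y} \<subseteq> st F"
    using fgen_cover[OF A a0, of "{x, y}"] by auto
  then have "x + y \<in> st F" using submod_st[OF fgen_Fbar[OF F(1)]] unfolding submod_def by blast
  then show "x + y \<in> starf D st A" using st_subset_starf[OF F(1,2)] by blast
next
  fix r x assume "r \<in> D" "x \<in> starf D st A"
  then obtain F where F: "F \<in> fgen D" "F \<subseteq> A" "x \<in> st F" unfolding mem_starf_iff by blast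
  then have "r * x \<in> st F" using submod_st[OF fgen_Fbar[OF F(1)]] \<open>r \<in> D\<close> unfolding submod_def by blast
  then show "r * x \<in> starf D st A" using st_subset_starf[OF F(1,2)] by blast
qed

lemma mem_starf_Union_chain:
  assumes x: "x \<in> starf D st (\<Union>C)" and C: "C \<noteq> {}" "chain\<^sub>\<subseteq> C"
    and sub: "\<And>K. K \<in> C \<Longrightarrow> submod D K"
  obtains K where "K \<in> C" "x \<in> starf D st K"
proof -
  obtain F where F: "F \<in> fgen D" "F \<subseteq> \<Union>C" "x \<in> st F" using x unfolding mem_starf_iff by blast
  obtain G where G: "finite G" "F = lin D G" using F(1) unfolding fgen_def by blast
  have "G \<subseteq> \<Union>C" using lin_superset[OF one_mem_D, of G] G(2) F(2) by blast
  then obtain K where K: "K \<in> C" "G \<subseteq> K"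
    using finite_subset_Union_chain[OF G(1) _ C(1) C(2)[unfolded chain_subset_alt_def]] by blast
  have "F \<subseteq> K" unfolding G(2) by (rule lin_least[OF sub[OF K(1)] K(2)])
  then show ?thesis using that K(1) F(1,3) unfolding mem_starf_iff by blast
qed

lemma mult_mem_starf:
  assumes c: "c \<noteq> 0" and cE: "(\<lambda>e. c * e) ` E \<subseteq> A" and one: "1 \<in> starf D st E"
  shows "c \<in> starf D st A"
proof -
  obtain F where F: "F \<in> fgen D" "F \<subseteq> E" "1 \<in> st F" using one unfolding mem_starf_iff by blast
  obtain G g where G: "finite G" "F = lin D G" "g \<in> G" "g \<noteq> 0"
    using F(1) unfolding fgen_iff[OF one_mem_D] by blast
  have cF: "(\<lambda>e. c * e) ` F = lin D ((\<lambda>g. c * g) ` G)"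
    unfolding G(2) by (rule lin_scale_image[OF D c])
  have "(\<lambda>e. c * e) ` F \<in> fgen D" unfolding cF using G c by (intro fgen_lin[of _ "c * g"]) auto
  moreover have "(\<lambda>e. c * e) ` F \<subseteq> A" using F(2) cE by blast
  moreover have "c \<in> st ((\<lambda>e. c * e) ` F)"
    unfolding st_scale[OF c fgen_Fbar[OF F(1)]] using F(3) by force
  ultimately show ?thesis unfolding mem_starf_iff by blast
qed

abbreviation quasi_starf_prime :: "'a set \<Rightarrow> bool" where
  "quasi_starf_prime P \<equiv> quasi_prime D (starf D st) P"

lemma quasi_starf_primeD:
  assumes "quasi_starf_prime P"
  shows "prime_ideal_of D P" "P \<noteq> {0}" "starf D st P \<inter> D = P" "1 \<notin> P" "0 \<in> P" "P \<subseteq> D"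
    "mult_subset (D - P) D" "submod D P"
proof -
  show P: "prime_ideal_of D P" "P \<noteq> {0}" "starf D st P \<inter> D = P"
    using assms unfolding quasi_prime_def by auto
  show "1 \<notin> P" "0 \<in> P" "P \<subseteq> D" using prime_idealD[OF P(1)] by auto
  show "mult_subset (D - P) D" by (rule mult_subset_diff_prime[OF D order_refl P(1)])
  show "submod D P" using prime_idealD(1)[OF P(1)] unfolding ideal_of_def by blast
qed

lemma one_not_mem_starf_if_subset:
  assumes P: "quasi_starf_prime P" and A: "A \<subseteq> P"
  shows "1 \<notin> starf D st A"
  using starf_mono[OF A] quasi_starf_primeD(3,4)[OF P] one_mem_D by blast

lemma fgen_not_subset_quasi_starf_prime:
  assumes "F \<in> fgen D" "1 \<in> st F" "quasi_starf_prime P"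
  shows "\<not> F \<subseteq> P"
  using one_not_mem_starf_if_subset[OF assms(3)] st_subset_starf[OF assms(1)] assms(2) by blast

lemma quasi_starf_prime_if_maximal:
  assumes M: "ideal_of D M" "M \<noteq> {0}" "1 \<notin> starf D st M"
    and max: "\<And>J. ideal_of D J \<Longrightarrow> M \<subseteq> J \<Longrightarrow> 1 \<notin> starf D st J \<Longrightarrow> J = M"
  shows "quasi_starf_prime M"
proof -
  have Msub: "submod D M" using M(1) unfolding ideal_of_def by blast
  obtain a0 where a0: "a0 \<in> M" "a0 \<noteq> 0" using M(2) idealD(2)[OF M(1)] by blast
  have closed: "starf D st M \<inter> D = M"
  proof (rule max)
    show "ideal_of D (starf D st M \<inter> D)" unfolding ideal_of_def
      using submod_Int[OF submod_starf[OF Msub a0] subring_submod[OF D order_refl]] by blast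
    show "M \<subseteq> starf D st M \<inter> D" using subset_starf[OF Msub a0] idealD(1)[OF M(1)] by blast
    show "1 \<notin> starf D st (starf D st M \<inter> D)"
      using starf_mono[of _ "starf D st M"] starf_starf_subset[OF Msub a0] M(3) by blast
  qed
  have prime: "a \<in> M \<or> b \<in> M" if ab: "a \<in> D" "b \<in> D" "a * b \<in> M" for a b
  proof (rule ccontr)
    assume nab: "\<not> (a \<in> M \<or> b \<in> M)"
    define E where "E = {j + a * r | j r. j \<in> M \<and> r \<in> D}"
    note E = ideal_add_multiples[OF D M(1) ab(1), folded E_def]
    \<comment> \<open>By maximality \<open>1 \<in> (M + aD)\<^sup>\<star>\<^sup>f\<close>; as \<open>b (M + aD) \<subseteq> M\<close>, this puts \<open>b\<close> into \<open>M\<^sup>\<star>\<^sup>f \<inter> D = M\<close>.\<close>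
    have "1 \<in> starf D st E" using max[OF E(1,2)] E(3) nab by blast
    moreover have "(\<lambda>e. b * e) ` E \<subseteq> M"
    proof
      fix z assume "z \<in> (\<lambda>e. b * e) ` E"
      then obtain j r where jr: "j \<in> M" "r \<in> D" "z = b * (j + a * r)" unfolding E_def by blast
      then have "z = b * j + r * (a * b)" by (simp add: algebra_simps)
      then show "z \<in> M" using idealD(3,4)[OF M(1)] jr(1,2) ab(2,3) by simp
    qed
    moreover have "b \<noteq> 0" using nab idealD(2)[OF M(1)] by blast
    ultimately have "b \<in> starf D st M" using mult_mem_starf by blast
    then show False using closed ab(2) nab by blast
  qed
  have "1 \<notin> M" using subset_starf[OF Msub a0] M(3) by blast
  then have "prime_ideal_of D M" unfolding prime_ideal_of_def using M(1) one_mem_D prime by blast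
  then show ?thesis unfolding quasi_prime_def using M(2) closed by blast
qed

lemma quasi_starf_prime_above:
  assumes I: "ideal_of D I" "I \<noteq> {0}" and one: "1 \<notin> starf D st I"
  obtains P where "quasi_starf_prime P" "I \<subseteq> P"
proof -
  define A where "A = {J. ideal_of D J \<and> 1 \<notin> starf D st J}"
  have "I \<in> A" using I one unfolding A_def by simp
  moreover have "\<Union>C \<in> A" if C: "C \<noteq> {}" "C \<subseteq> A" "chain\<^sub>\<subseteq> C" for C
  proof -
    have ideals: "ideal_of D K" if "K \<in> C" for K using C(2) that unfolding A_def by blast
    have "1 \<notin> starf D st (\<Union>C)"
    proof
      assume "1 \<in> starf D st (\<Union>C)"
      then obtain K where "K \<in> C" "1 \<in> starf D st K"
        using mem_starf_Union_chain[OF _ C(1,3)] ideals unfolding ideal_of_def by metis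
      then show False using C(2) unfolding A_def by blast
    qed
    then show ?thesis using ideal_Union_chain[OF C(1,3) ideals] unfolding A_def by blast
  qed
  ultimately obtain M where M: "M \<in> A" "I \<subseteq> M" and max: "\<forall>X\<in>A. M \<subseteq> X \<longrightarrow> X = M"
    using subset_Zorn_above[of I A] by blast
  have "quasi_starf_prime M"
  proof (rule quasi_starf_prime_if_maximal)
    show "ideal_of D M" "1 \<notin> starf D st M" using M(1) unfolding A_def by auto
    show "M \<noteq> {0}" using I(2) M(2) idealD(2)[OF I(1)] by blast
    show "J = M" if "ideal_of D J" "M \<subseteq> J" "1 \<notin> starf D st J" for J
      using max that unfolding A_def by blast
  qed
  then show ?thesis using that M(2) by blast
qed

end

subsection \<open>Star primes of an overring\<close>

locale overring_context = semistar_domain D st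
  for D :: "'a::field set" and st :: "'a set \<Rightarrow> 'a set" +
  fixes T :: "'a set"
  assumes quotient_field: "quotient_field_is_univ D" and overring: "overring D T"
begin

lemma T: "subring T" and D_subset_T: "D \<subseteq> T"
  using overring unfolding overring_def by auto

lemma one_mem_T: "1 \<in> T"
  by (rule subringD(2)[OF T])

lemma exists_denominator: "\<exists>b\<in>D. b \<noteq> 0 \<and> b * x \<in> D"
proof -
  obtain a b where "a \<in> D" "b \<in> D" "b \<noteq> 0" "x = a / b"
    using quotient_field unfolding quotient_field_is_univ_def by blast
  then show ?thesis by (intro bexI[of _ b]) auto
qed

lemma lin_subset_T: "E \<subseteq> T \<Longrightarrow> lin T E \<subseteq> T"
  by (rule lin_least[OF subring_submod[OF T order_refl]])

lemma mem_loc_nonzero: "x \<in> loc D (D - {0})"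
proof -
  obtain a b where "a \<in> D" "b \<in> D" "b \<noteq> 0" "x = a / b"
    using quotient_field unfolding quotient_field_is_univ_def by blast
  then show ?thesis unfolding loc_def by blast
qed

lemma mult_subset_nonzero: "mult_subset (D - {0}) D"
  unfolding mult_subset_def using one_mem_D subringD(5)[OF D] by auto

lemma contraction_ne_zero:
  assumes J: "ideal_of T J" "J \<noteq> {0}"
  shows "J \<inter> D \<noteq> {0}"
proof -
  obtain j where j: "j \<in> J" "j \<noteq> 0" using J(2) idealD(2)[OF J(1)] by auto
  obtain b where b: "b \<in> D" "b \<noteq> 0" "b * j \<in> D" using exists_denominator by blast
  have "b * j \<in> J" using idealD(4)[OF J(1) _ j(1)] b(1) D_subset_T by blast
  then have "b * j \<in> J \<inter> D" "b * j \<noteq> 0" using b(2,3) j(2) by simp_all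
  then show ?thesis by blast
qed

lemma mult_subset_compl_quasi_starf_prime:
  "quasi_starf_prime P \<Longrightarrow> mult_subset (D - P) T"
  using mult_subset_mono[OF quasi_starf_primeD(7)] D_subset_T by (metis Diff_subset order_trans)

lemma mult_subset_compl_prime:
  "prime_ideal_of T Q \<Longrightarrow> mult_subset (D - Q) D"
  by (rule mult_subset_mono[OF mult_subset_diff_prime[OF D D_subset_T]]) blast+

lemma quasi_starf_prime_above_contraction:
  assumes J: "ideal_of T J" "J \<noteq> {0}"
  shows "starf D st (J \<inter> D) \<noteq> st D \<longleftrightarrow> (\<exists>P. quasi_starf_prime P \<and> J \<inter> D \<subseteq> P)"
proof -
  have JD: "ideal_of D (J \<inter> D)" by (rule ideal_contraction[OF D D_subset_T J(1)])
  have "starf D st (J \<inter> D) \<noteq> st D \<longleftrightarrow> 1 \<notin> starf D st (J \<inter> D)"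
    using starf_eq_st_D_iff[of "J \<inter> D"] by blast
  also have "\<dots> \<longleftrightarrow> (\<exists>P. quasi_starf_prime P \<and> J \<inter> D \<subseteq> P)"
  proof
    assume "1 \<notin> starf D st (J \<inter> D)"
    then obtain P where "quasi_starf_prime P" "J \<inter> D \<subseteq> P"
      by (rule quasi_starf_prime_above[OF JD contraction_ne_zero[OF J]])
    then show "\<exists>P. quasi_starf_prime P \<and> J \<inter> D \<subseteq> P" by blast
  qed (use one_not_mem_starf_if_subset in blast)
  finally show ?thesis .
qed

definition star_prime :: "'a set \<Rightarrow> bool" where
  "star_prime Q \<longleftrightarrow> prime_ideal_of T Q \<and> Q \<noteq> {0} \<and> starf D st (Q \<inter> D) \<noteq> st D"

lemma star_prime_iff:
  "star_prime Q \<longleftrightarrow>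
    prime_ideal_of T Q \<and> Q \<noteq> {0} \<and> (\<exists>P. quasi_starf_prime P \<and> Q \<inter> D \<subseteq> P)"
  unfolding star_prime_def using quasi_starf_prime_above_contraction prime_idealD(1) by blast

lemma star_prime_if_max_prop_prime: "max_prop_prime D st T N \<Longrightarrow> star_prime N"
  unfolding max_prop_prime_def star_prime_def by blast

lemma maximal_ideal_with_starf_proper_contraction:
  assumes I: "ideal_of T I" and one: "1 \<notin> starf D st (I \<inter> D)"
  shows "\<exists>N. ideal_of T N \<and> I \<subseteq> N \<and> 1 \<notin> starf D st (N \<inter> D) \<and>
    (\<forall>J. ideal_of T J \<and> N \<subseteq> J \<and> 1 \<notin> starf D st (J \<inter> D) \<longrightarrow> J = N)"
proof -
  define A where "A = {J. ideal_of T J \<and> 1 \<notin> starf D st (J \<inter> D)}"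
  have "I \<in> A" using I one unfolding A_def by simp
  moreover have "\<Union>C \<in> A" if C: "C \<noteq> {}" "C \<subseteq> A" "chain\<^sub>\<subseteq> C" for C
  proof -
    have ideals: "ideal_of T K" if "K \<in> C" for K using C(2) that unfolding A_def by blast
    have "1 \<notin> starf D st (\<Union>C \<inter> D)"
    proof
      assume "1 \<in> starf D st (\<Union>C \<inter> D)"
      moreover have "\<Union>C \<inter> D = \<Union>((\<lambda>K. K \<inter> D) ` C)" by blast
      moreover have "chain\<^sub>\<subseteq> ((\<lambda>K. K \<inter> D) ` C)"
        using C(3) unfolding chain_subset_def by (auto dest: Int_mono[OF _ order_refl])
      moreover have "submod D K'" if "K' \<in> (\<lambda>K. K \<inter> D) ` C" for K'
        using that ideal_contraction[OF D D_subset_T ideals] unfolding ideal_of_def by blast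
      ultimately obtain K' where "K' \<in> (\<lambda>K. K \<inter> D) ` C" "1 \<in> starf D st K'"
        using mem_starf_Union_chain C(1) by (metis image_is_empty)
      then show False using C(2) unfolding A_def by blast
    qed
    then show ?thesis using ideal_Union_chain[OF C(1,3) ideals] unfolding A_def by blast
  qed
  ultimately obtain N where "N \<in> A" "I \<subseteq> N" and max: "\<forall>X\<in>A. N \<subseteq> X \<longrightarrow> X = N"
    using subset_Zorn_above[of I A] by blast
  then show ?thesis unfolding A_def by blast
qed

lemma max_prop_prime_above:
  assumes I: "ideal_of T I" "I \<noteq> {0}" and one: "1 \<notin> starf D st (I \<inter> D)"
  obtains N where "max_prop_prime D st T N" "I \<subseteq> N"
proof -
  obtain N where N: "ideal_of T N" "I \<subseteq> N" "1 \<notin> starf D st (N \<inter> D)"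
    and max: "\<forall>J. ideal_of T J \<and> N \<subseteq> J \<and> 1 \<notin> starf D st (J \<inter> D) \<longrightarrow> J = N"
    using maximal_ideal_with_starf_proper_contraction[OF I(1) one] by blast
  have N0: "N \<noteq> {0}" using I(2) N(2) idealD(2)[OF I(1)] by blast
  obtain P where P: "quasi_starf_prime P" "N \<inter> D \<subseteq> P"
    using quasi_starf_prime_above_contraction[OF N(1) N0] N(3) one_mem_st_D by fastforce
  \<comment> \<open>\<open>N\<close> is even maximal among the ideals of \<open>T\<close> missing \<open>D - P\<close>, hence prime\<close>
  have "prime_ideal_of T N"
  proof (rule prime_idealI_extensions_meet[OF T N(1) mult_subset_compl_quasi_starf_prime[OF P(1)]])
    show "N \<inter> (D - P) = {}" using P(2) by blast
    fix x assume x: "x \<in> T" "x \<notin> N"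
    define E where "E = {j + x * r | j r. j \<in> N \<and> r \<in> T}"
    note E = ideal_add_multiples[OF T N(1) x(1), folded E_def]
    have "1 \<in> starf D st (E \<inter> D)" using max E(1,2,3) x(2) by blast
    then have "\<not> E \<inter> D \<subseteq> P" using one_not_mem_starf_if_subset[OF P(1)] by blast
    then show "\<exists>q\<in>N. \<exists>r\<in>T. q + x * r \<in> D - P" unfolding E_def by blast
  qed
  moreover have "starf D st (J \<inter> D) \<noteq> st D \<longleftrightarrow> 1 \<notin> starf D st (J \<inter> D)" for J
    using starf_eq_st_D_iff[of "J \<inter> D"] by blast
  ultimately have "max_prop_prime D st T N"
    unfolding max_prop_prime_def using N(1,3) N0 max by blast
  then show ?thesis using that N(2) by blast
qed

subsection \<open>The semistar operation ell on the overring\<close>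

abbreviation ell_T :: "'a set \<Rightarrow> 'a set" where
  "ell_T \<equiv> ell D st T"

lemma mem_ell_iff: "x \<in> ell_T E \<longleftrightarrow> (\<forall>P. quasi_starf_prime P \<longrightarrow> x \<in> lin (loc T (D - P)) E)"
  unfolding ell_def by blast

lemma subring_loc_T: "quasi_starf_prime P \<Longrightarrow> subring (loc T (D - P))"
  by (rule subring_loc[OF T mult_subset_compl_quasi_starf_prime])

lemma T_subset_loc: "quasi_starf_prime P \<Longrightarrow> T \<subseteq> loc T (D - P)"
  by (rule subset_loc[OF mult_subsetD(2)[OF mult_subset_compl_quasi_starf_prime]])

lemma lin_loc_T: "quasi_starf_prime P \<Longrightarrow> lin (loc T (D - P)) T = loc T (D - P)"
  by (rule lin_loc_eq_loc[OF T mult_subset_compl_quasi_starf_prime order_refl, of P 1])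
    (use quasi_starf_primeD(4) one_mem_D one_mem_T in auto)

lemma mem_ell_T_iff: "x \<in> ell_T T \<longleftrightarrow> (\<forall>P. quasi_starf_prime P \<longrightarrow> x \<in> loc T (D - P))"
  unfolding mem_ell_iff using lin_loc_T by auto

lemma subset_ell: "E \<subseteq> ell_T E"
proof
  fix x assume "x \<in> E"
  then show "x \<in> ell_T E"
    unfolding mem_ell_iff using lin_superset[OF subringD(2)[OF subring_loc_T]] by blast
qed

lemma one_mem_ell_T: "1 \<in> ell_T T"
  using subset_ell[of T] one_mem_T by blast

lemma ell_eq_ell_T_iff:
  assumes E: "submod T E" "E \<subseteq> T"
  shows "ell_T E = ell_T T \<longleftrightarrow> (\<forall>P. quasi_starf_prime P \<longrightarrow> (\<exists>s\<in>D - P. s \<in> E))"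
proof (intro iffI allI impI)
  fix P assume eq: "ell_T E = ell_T T" and P: "quasi_starf_prime P"
  note S = mult_subset_compl_quasi_starf_prime[OF P]
  have "1 \<in> lin (loc T (D - P)) E" using one_mem_ell_T P unfolding eq[symmetric] mem_ell_iff by blast
  moreover have "lin (loc T (D - P)) E \<subseteq> loc E (D - P)"
    by (rule lin_loc_subset_loc[OF S E(1) subset_loc[OF mult_subsetD(2)[OF S]]])
  ultimately have "1 \<in> loc E (D - P)" by blast
  then show "\<exists>s\<in>D - P. s \<in> E" unfolding mem_loc_iff[OF mult_subsetD(3)[OF S]] by simp
next
  assume meets: "\<forall>P. quasi_starf_prime P \<longrightarrow> (\<exists>s\<in>D - P. s \<in> E)"
  have "lin (loc T (D - P)) E = lin (loc T (D - P)) T" if P: "quasi_starf_prime P" for P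
  proof -
    obtain s where "s \<in> D - P" "s \<in> E" using meets P by blast
    then show ?thesis
      using lin_loc_eq_loc[OF T mult_subset_compl_quasi_starf_prime[OF P] E(2)] lin_loc_T[OF P] by simp
  qed
  then show "ell_T E = ell_T T" unfolding set_eq_iff mem_ell_iff by simp
qed

lemma ell_lin_eq_ell_T_if_one_mem_st:
  assumes F: "F \<in> fgen D" "F \<subseteq> D" "1 \<in> st F"
  shows "ell_T (lin T F) = ell_T T"
proof (rule ell_eq_ell_T_iff[OF submod_lin[OF T] lin_subset_T, THEN iffD2])
  show "F \<subseteq> T" using F(2) D_subset_T by (rule order_trans)
  show "\<forall>P. quasi_starf_prime P \<longrightarrow> (\<exists>s\<in>D - P. s \<in> lin T F)"
  proof (intro allI impI)
    fix P assume P: "quasi_starf_prime P"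
    obtain f where "f \<in> F" "f \<notin> P" using fgen_not_subset_quasi_starf_prime[OF F(1,3) P] by blast
    then show "\<exists>s\<in>D - P. s \<in> lin T F" using F(2) lin_superset[OF one_mem_T, of F] by blast
  qed
qed

lemma fgen_lin_T: "F \<in> fgen D \<Longrightarrow> lin T F \<in> fgen T"
  using lin_lin[OF D T D_subset_T] unfolding fgen_iff[OF one_mem_D] fgen_iff[OF one_mem_T] by metis

lemma star_prime_if_quasi_prime_ell:
  assumes "quasi_prime T (starf T ell_T) Q"
  shows "star_prime Q"
proof -
  have Q: "prime_ideal_of T Q" "Q \<noteq> {0}" "starf T ell_T Q \<inter> T = Q"
    using assms unfolding quasi_prime_def by auto
  have Qsub: "submod T Q" using prime_idealD(1)[OF Q(1)] unfolding ideal_of_def by blast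
  have "1 \<notin> starf D st (Q \<inter> D)"
  proof
    assume "1 \<in> starf D st (Q \<inter> D)"
    then obtain F where F: "F \<in> fgen D" "F \<subseteq> Q \<inter> D" "1 \<in> st F" unfolding mem_starf_iff by blast
    have "lin T F \<subseteq> Q" by (rule lin_least[OF Qsub]) (use F(2) in blast)
    moreover have "1 \<in> ell_T (lin T F)"
      using ell_lin_eq_ell_T_if_one_mem_st[OF F(1) _ F(3)] F(2) one_mem_ell_T by auto
    ultimately have "1 \<in> starf T ell_T Q" unfolding starf_def using fgen_lin_T[OF F(1)] by blast
    then show False using Q(3) one_mem_T prime_idealD(2)[OF Q(1)] by blast
  qed
  then show ?thesis unfolding star_prime_def using Q(1,2) starf_eq_st_D_iff[of "Q \<inter> D"] by auto
qed

lemma quasi_prime_ell_if_star_prime: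
  assumes "star_prime Q"
  shows "quasi_prime T (starf T ell_T) Q"
proof -
  obtain P where P: "quasi_starf_prime P" "Q \<inter> D \<subseteq> P" and Q: "prime_ideal_of T Q" "Q \<noteq> {0}"
    using assms unfolding star_prime_iff by blast
  note S = mult_subset_compl_quasi_starf_prime[OF P(1)]
  have Qsub: "submod T Q" using prime_idealD(1)[OF Q(1)] unfolding ideal_of_def by blast
  have "starf T ell_T Q \<inter> T \<subseteq> Q"
  proof
    fix z assume z: "z \<in> starf T ell_T Q \<inter> T"
    then obtain F where F: "F \<in> fgen T" "F \<subseteq> Q" "z \<in> ell_T F" unfolding starf_def by blast
    have "z \<in> lin (loc T (D - P)) F" using F(3) P(1) unfolding mem_ell_iff by blast
    moreover have "F \<subseteq> loc Q (D - P)" using F(2) subset_loc[OF mult_subsetD(2)[OF S]] by (rule order_trans)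
    then have "lin (loc T (D - P)) F \<subseteq> loc Q (D - P)" by (rule lin_loc_subset_loc[OF S Qsub])
    ultimately have "z \<in> loc Q (D - P)" by blast
    then obtain s where s: "s \<in> D - P" "s * z \<in> Q"
      unfolding mem_loc_iff[OF mult_subsetD(3)[OF S]] by blast
    have "s \<notin> Q" using s(1) P(2) by blast
    then show "z \<in> Q" using prime_idealD(5)[OF Q(1), of s z] s z D_subset_T by blast
  qed
  moreover have "Q \<subseteq> starf T ell_T Q \<inter> T"
  proof
    fix q assume q: "q \<in> Q"
    obtain q0 where q0: "q0 \<in> Q" "q0 \<noteq> 0" using Q(2) prime_idealD(3)[OF Q(1)] by auto
    have F: "lin T {q, q0} \<in> fgen T"
      unfolding fgen_iff[OF one_mem_T] using q0(2) by (intro exI[of _ "{q, q0}"]) auto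
    have "lin T {q, q0} \<subseteq> Q" by (rule lin_least[OF Qsub]) (use q q0 in auto)
    moreover have "q \<in> lin T {q, q0}" using lin_superset[OF one_mem_T, of "{q, q0}"] by blast
    then have "q \<in> ell_T (lin T {q, q0})" using subset_ell by blast
    ultimately show "q \<in> starf T ell_T Q \<inter> T"
      unfolding starf_def using F q prime_idealD(4)[OF Q(1)] by blast
  qed
  ultimately have "starf T ell_T Q \<inter> T = Q" by (rule subset_antisym)
  then show ?thesis unfolding quasi_prime_def using Q by blast
qed

lemma quasi_prime_ell_iff: "quasi_prime T (starf T ell_T) Q \<longleftrightarrow> star_prime Q"
  using star_prime_if_quasi_prime_ell quasi_prime_ell_if_star_prime by blast

lemma linked_ell: "linked D st T ell_T"
  unfolding linked_def
proof (intro allI impI)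
  fix F assume F: "ideal_of D F \<and> F \<in> fgen D \<and> st F = st D"
  then show "ell_T (lin T F) = ell_T T"
    using ell_lin_eq_ell_T_if_one_mem_st idealD(1) one_mem_st_D by metis
qed

definition loc_eq_at_star_primes :: bool where
  "loc_eq_at_star_primes \<longleftrightarrow> (\<forall>Q. star_prime Q \<longrightarrow> loc D (D - Q) = loc T (T - Q))"

lemma loc_eq_at_star_primes_iff_subset:
  "loc_eq_at_star_primes \<longleftrightarrow> (\<forall>Q. star_prime Q \<longrightarrow> T \<subseteq> loc D (D - Q))"
  unfolding loc_eq_at_star_primes_def star_prime_def
  using loc_eq_loc_iff_subset[OF D T D_subset_T] by blast

lemma flat_st_ell_iff: "flat_st D st T ell_T \<longleftrightarrow> loc_eq_at_star_primes"
  unfolding flat_st_def loc_eq_at_star_primes_def quasi_prime_ell_iff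
  using linked_ell by (simp add: Diff_Int)

lemma loc_eq_at_star_primes_iff_max:
  "loc_eq_at_star_primes \<longleftrightarrow> (\<forall>N. max_prop_prime D st T N \<longrightarrow> loc D (D - N) = loc T (T - N))"
proof
  assume "loc_eq_at_star_primes"
  then show "\<forall>N. max_prop_prime D st T N \<longrightarrow> loc D (D - N) = loc T (T - N)"
    unfolding loc_eq_at_star_primes_def using star_prime_if_max_prop_prime by blast
next
  assume H: "\<forall>N. max_prop_prime D st T N \<longrightarrow> loc D (D - N) = loc T (T - N)"
  show loc_eq_at_star_primes unfolding loc_eq_at_star_primes_iff_subset
  proof (intro allI impI)
    fix Q assume "star_prime Q"
    then have Q: "prime_ideal_of T Q" "Q \<noteq> {0}" "1 \<notin> starf D st (Q \<inter> D)"
      unfolding star_prime_def using starf_eq_st_D_iff[of "Q \<inter> D"] by auto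
    obtain N where N: "max_prop_prime D st T N" "Q \<subseteq> N"
      by (rule max_prop_prime_above[OF prime_idealD(1)[OF Q(1)] Q(2,3)])
    have "prime_ideal_of T N" using N(1) unfolding max_prop_prime_def by blast
    then have "T \<subseteq> loc D (D - N)" using H N(1) loc_eq_loc_iff_subset[OF D T D_subset_T] by blast
    also have "loc D (D - N) \<subseteq> loc D (D - Q)" by (rule loc_mono) (use N(2) in auto)
    finally show "T \<subseteq> loc D (D - Q)" .
  qed
qed

lemma mem_ell_T_if_mem_loc_max:
  assumes H: "\<And>N. max_prop_prime D st T N \<Longrightarrow> x \<in> loc T (T - N)"
  shows "x \<in> ell_T T"
  unfolding mem_ell_T_iff
proof (intro allI impI)
  fix P assume P: "quasi_starf_prime P"
  note S = mult_subset_compl_quasi_starf_prime[OF P]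
  define I where "I = {t\<in>T. t * x \<in> T}"
  have I: "ideal_of T I" unfolding I_def by (rule ideal_conductor[OF T])
  show "x \<in> loc T (D - P)"
  proof (rule ccontr)
    assume "x \<notin> loc T (D - P)"
    \<comment> \<open>then the conductor \<open>I\<close> of \<open>x\<close> lies in some maximal \<open>N\<close>, contradicting \<open>x \<in> T\<^sub>N\<close>\<close>
    then have "I \<inter> D \<subseteq> P" unfolding I_def mem_loc_iff[OF mult_subsetD(3)[OF S]] by blast
    then have one: "1 \<notin> starf D st (I \<inter> D)" by (rule one_not_mem_starf_if_subset[OF P])
    obtain b where "b \<in> D" "b \<noteq> 0" "b * x \<in> D" using exists_denominator by blast
    then have "b \<in> I" "b \<noteq> 0" unfolding I_def using D_subset_T by auto
    then have "I \<noteq> {0}" by blast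
    then obtain N where N: "max_prop_prime D st T N" "I \<subseteq> N"
      by (rule max_prop_prime_above[OF I _ one])
    have "prime_ideal_of T N" using N(1) unfolding max_prop_prime_def by blast
    then have N0: "0 \<notin> T - N" using prime_idealD(3) by blast
    obtain u where "u \<in> T - N" "u * x \<in> T" using H[OF N(1)] unfolding mem_loc_iff[OF N0] by blast
    then show False using N(2) unfolding I_def by blast
  qed
qed

lemma ell_T_eq_Inter_max:
  "ell_T T = \<Inter>{loc T (T - N) | N. max_prop_prime D st T N}"
proof (intro set_eqI iffI)
  fix x assume x: "x \<in> ell_T T"
  have "x \<in> loc T (T - N)" if N: "max_prop_prime D st T N" for N
  proof -
    obtain P where P: "quasi_starf_prime P" "N \<inter> D \<subseteq> P"
      using star_prime_if_max_prop_prime[OF N] unfolding star_prime_iff by blast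
    have "x \<in> loc T (D - P)" using x P(1) unfolding mem_ell_T_iff by blast
    moreover have "loc T (D - P) \<subseteq> loc T (T - N)" by (rule loc_mono) (use P(2) D_subset_T in blast)+
    ultimately show ?thesis by blast
  qed
  then show "x \<in> \<Inter>{loc T (T - N) | N. max_prop_prime D st T N}" by blast
next
  fix x assume "x \<in> \<Inter>{loc T (T - N) | N. max_prop_prime D st T N}"
  then show "x \<in> ell_T T" by (intro mem_ell_T_if_mem_loc_max) blast
qed

lemma loc_eq_at_star_primes_iff_ell_T:
  "loc_eq_at_star_primes \<longleftrightarrow> ell_T T = \<Inter>{loc D (D - N) | N. max_prop_prime D st T N}"
proof
  assume "loc_eq_at_star_primes"
  then have "loc D (D - N) = loc T (T - N)" if "max_prop_prime D st T N" for N
    using loc_eq_at_star_primes_iff_max that by blast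
  then have "{loc D (D - N) | N. max_prop_prime D st T N} = {loc T (T - N) | N. max_prop_prime D st T N}"
    by force
  then show "ell_T T = \<Inter>{loc D (D - N) | N. max_prop_prime D st T N}"
    using ell_T_eq_Inter_max by simp
next
  assume H: "ell_T T = \<Inter>{loc D (D - N) | N. max_prop_prime D st T N}"
  show loc_eq_at_star_primes unfolding loc_eq_at_star_primes_iff_max
  proof (intro allI impI)
    fix N assume N: "max_prop_prime D st T N"
    have "ell_T T \<subseteq> loc D (D - N)" unfolding H using N by blast
    then have "T \<subseteq> loc D (D - N)" using subset_ell[of T] by (rule order_trans[rotated])
    then show "loc D (D - N) = loc T (T - N)"
      using loc_eq_loc_iff_subset[OF D T D_subset_T] N unfolding max_prop_prime_def by blast
  qed
qed

lemma lin_conductor_meets_compl: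
  assumes V: loc_eq_at_star_primes and P: "quasi_starf_prime P" and X: "finite X" "X \<subseteq> T"
  shows "\<exists>s\<in>D - P. s \<in> lin T {d\<in>D. \<forall>x\<in>X. d * x \<in> D}"
proof (rule ccontr)
  define I where "I = {d\<in>D. \<forall>x\<in>X. d * x \<in> D}"
  assume "\<not> (\<exists>s\<in>D - P. s \<in> lin T {d\<in>D. \<forall>x\<in>X. d * x \<in> D})"
  then have disj: "lin T I \<inter> (D - P) = {}" unfolding I_def by blast
  have "I \<subseteq> T" unfolding I_def using D_subset_T by blast
  then have J: "ideal_of T (lin T I)" unfolding ideal_of_def using submod_lin[OF T] lin_subset_T by blast
  obtain Q where Q: "prime_ideal_of T Q" "lin T I \<subseteq> Q" "Q \<inter> (D - P) = {}"
    by (rule prime_ideal_avoiding[OF T J mult_subset_compl_quasi_starf_prime[OF P] disj])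
  have IQ: "I \<subseteq> Q" using lin_superset[OF one_mem_T, of I] Q(2) by (rule order_trans)
  obtain b where b: "b \<in> D - {0}" "\<forall>x\<in>X. b * x \<in> D"
    using common_denominator[OF D mult_subset_nonzero X(1)] mem_loc_nonzero by blast
  then have "b \<in> Q" "b \<noteq> 0" using IQ unfolding I_def by auto
  then have "star_prime Q" unfolding star_prime_iff using Q(1,3) P by blast
  then have "X \<subseteq> loc D (D - Q)"
    using V X(2) unfolding loc_eq_at_star_primes_iff_subset by blast
  then obtain s where "s \<in> D - Q" "\<forall>x\<in>X. s * x \<in> D"
    using common_denominator[OF D mult_subset_compl_prime[OF Q(1)] X(1)] by blast
  then show False using IQ unfolding I_def by blast
qed

lemma loc_eq_at_star_primes_iff_conductors_meet:
  "loc_eq_at_star_primes \<longleftrightarrow>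
    (\<forall>P. quasi_starf_prime P \<longrightarrow> (\<forall>x\<in>T. \<exists>s\<in>D - P. s \<in> lin T {d\<in>D. d * x \<in> D}))"
proof
  assume V: loc_eq_at_star_primes
  show "\<forall>P. quasi_starf_prime P \<longrightarrow> (\<forall>x\<in>T. \<exists>s\<in>D - P. s \<in> lin T {d\<in>D. d * x \<in> D})"
  proof (intro allI impI ballI)
    fix P x assume "quasi_starf_prime P" "x \<in> T"
    then show "\<exists>s\<in>D - P. s \<in> lin T {d\<in>D. d * x \<in> D}"
      using lin_conductor_meets_compl[OF V, of P "{x}"] by simp
  qed
next
  assume H: "\<forall>P. quasi_starf_prime P \<longrightarrow> (\<forall>x\<in>T. \<exists>s\<in>D - P. s \<in> lin T {d\<in>D. d * x \<in> D})"
  show loc_eq_at_star_primes unfolding loc_eq_at_star_primes_iff_subset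
  proof (intro allI impI subsetI)
    fix Q x assume Q: "star_prime Q" and x: "x \<in> T"
    obtain P where P: "quasi_starf_prime P" "Q \<inter> D \<subseteq> P" and QT: "prime_ideal_of T Q"
      using Q unfolding star_prime_iff by blast
    have Qsub: "submod T Q" using prime_idealD(1)[OF QT] unfolding ideal_of_def by blast
    obtain s where "s \<in> D - P" "s \<in> lin T {d\<in>D. d * x \<in> D}" using H P(1) x by blast
    moreover have "s \<notin> Q" using \<open>s \<in> D - P\<close> P(2) by blast
    ultimately show "x \<in> loc D (D - Q)" using mem_loc_if_lin_conductor[OF Qsub] by blast
  qed
qed

lemma loc_eq_at_star_primes_iff_conductor:
  "loc_eq_at_star_primes \<longleftrightarrow> (\<forall>x\<in>T. x \<noteq> 0 \<longrightarrow> ell_T (lin T {d\<in>D. d * x \<in> D}) = ell_T T)"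
proof -
  have ell_iff: "ell_T (lin T {d\<in>D. d * x \<in> D}) = ell_T T \<longleftrightarrow>
      (\<forall>P. quasi_starf_prime P \<longrightarrow> (\<exists>s\<in>D - P. s \<in> lin T {d\<in>D. d * x \<in> D}))" for x
    by (rule ell_eq_ell_T_iff[OF submod_lin[OF T] lin_subset_T]) (use D_subset_T in blast)
  have zero: "\<exists>s\<in>D - P. s \<in> lin T {d\<in>D. d * 0 \<in> D}" if "quasi_starf_prime P" for P
    using that quasi_starf_primeD(4) one_mem_D subringD(1)[OF D] lin_superset[OF one_mem_T, of D]
    by auto
  show ?thesis unfolding loc_eq_at_star_primes_iff_conductors_meet ell_iff
  proof (intro iffI ballI impI allI)
    fix x P assume "\<forall>P. quasi_starf_prime P \<longrightarrow> (\<forall>x\<in>T. \<exists>s\<in>D - P. s \<in> lin T {d\<in>D. d * x \<in> D})"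
      and "x \<in> T" "quasi_starf_prime P"
    then show "\<exists>s\<in>D - P. s \<in> lin T {d\<in>D. d * x \<in> D}" by blast
  next
    fix P x assume "\<forall>x\<in>T. x \<noteq> 0 \<longrightarrow>
        (\<forall>P. quasi_starf_prime P \<longrightarrow> (\<exists>s\<in>D - P. s \<in> lin T {d\<in>D. d * x \<in> D}))"
      and P: "quasi_starf_prime P" and "x \<in> T"
    then show "\<exists>s\<in>D - P. s \<in> lin T {d\<in>D. d * x \<in> D}" using zero[OF P] by (cases "x = 0") auto
  qed
qed

lemma ell_lin_eq_ell_T_or_subset_loc:
  assumes V: loc_eq_at_star_primes and P: "prime_ideal_of D P" "P \<noteq> {0}"
  shows "ell_T (lin T P) = ell_T T \<or> T \<subseteq> loc D (D - P)"
proof -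
  have PT: "P \<subseteq> T" using prime_idealD(4)[OF P(1)] D_subset_T by (rule order_trans)
  have "T \<subseteq> loc D (D - P)" if ne: "ell_T (lin T P) \<noteq> ell_T T"
  proof -
    \<comment> \<open>\<open>PT\<close> misses some \<open>D - P'\<close>, and a prime of \<open>T\<close> above \<open>PT\<close> missing \<open>D - P'\<close> is a star prime\<close>
    obtain P' where P': "quasi_starf_prime P'" "lin T P \<inter> (D - P') = {}"
      using ne ell_eq_ell_T_iff[OF submod_lin[OF T] lin_subset_T[OF PT]] by blast
    have J: "ideal_of T (lin T P)" unfolding ideal_of_def using submod_lin[OF T] lin_subset_T[OF PT] by blast
    obtain Q where Q: "prime_ideal_of T Q" "lin T P \<subseteq> Q" "Q \<inter> (D - P') = {}"
      by (rule prime_ideal_avoiding[OF T J mult_subset_compl_quasi_starf_prime[OF P'(1)] P'(2)])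
    have PQ: "P \<subseteq> Q" using lin_superset[OF one_mem_T, of P] Q(2) by (rule order_trans)
    obtain p where "p \<in> P" "p \<noteq> 0" using P prime_idealD(3)[OF P(1)] by auto
    then have "Q \<noteq> {0}" using PQ by blast
    then have "star_prime Q" unfolding star_prime_iff using Q(1,3) P'(1) by blast
    then have "T \<subseteq> loc D (D - Q)" using V unfolding loc_eq_at_star_primes_iff_subset by blast
    also have "loc D (D - Q) \<subseteq> loc D (D - P)" by (rule loc_mono) (use PQ in blast)+
    finally show ?thesis .
  qed
  then show ?thesis by blast
qed

lemma ell_lin_contraction_ne_ell_T:
  assumes N: "max_prop_prime D st T N"
  shows "ell_T (lin T (N \<inter> D)) \<noteq> ell_T T"
proof
  assume "ell_T (lin T (N \<inter> D)) = ell_T T"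
  moreover obtain P where P: "quasi_starf_prime P" "N \<inter> D \<subseteq> P"
    using star_prime_if_max_prop_prime[OF N] unfolding star_prime_iff by blast
  moreover have "N \<inter> D \<subseteq> T" using D_subset_T by blast
  note ell_iff = ell_eq_ell_T_iff[OF submod_lin[OF T] lin_subset_T[OF this]]
  ultimately obtain s where "s \<in> D - P" "s \<in> lin T (N \<inter> D)" unfolding ell_iff by blast
  moreover have "prime_ideal_of T N" using N unfolding max_prop_prime_def by blast
  then have "submod T N" using prime_idealD(1) unfolding ideal_of_def by blast
  then have "lin T (N \<inter> D) \<subseteq> N" by (rule lin_least) blast
  ultimately show False using P(2) by blast
qed

lemma loc_eq_at_star_primes_iff_primes:
  "loc_eq_at_star_primes \<longleftrightarrow>
    (\<forall>P. prime_ideal_of D P \<and> P \<noteq> {0} \<longrightarrow> ell_T (lin T P) = ell_T T \<or> T \<subseteq> loc D (D - P))"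
proof
  assume H: "\<forall>P. prime_ideal_of D P \<and> P \<noteq> {0} \<longrightarrow> ell_T (lin T P) = ell_T T \<or> T \<subseteq> loc D (D - P)"
  show loc_eq_at_star_primes unfolding loc_eq_at_star_primes_iff_max
  proof (intro allI impI)
    fix N assume N: "max_prop_prime D st T N"
    have NT: "prime_ideal_of T N" "N \<noteq> {0}" using N unfolding max_prop_prime_def by blast+
    have "prime_ideal_of D (N \<inter> D)" "N \<inter> D \<noteq> {0}"
      using prime_ideal_contraction[OF D D_subset_T NT(1)]
        contraction_ne_zero[OF prime_idealD(1)[OF NT(1)] NT(2)] .
    then have "T \<subseteq> loc D (D - (N \<inter> D))" using H ell_lin_contraction_ne_ell_T[OF N] by blast
    then show "loc D (D - N) = loc T (T - N)"
      using loc_eq_loc_iff_subset[OF D T D_subset_T NT(1)] by (simp add: Diff_Int)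
  qed
qed (use ell_lin_eq_ell_T_or_subset_loc in blast)

lemma one_mem_lin_conductor_loc:
  assumes V: loc_eq_at_star_primes and P: "quasi_starf_prime P"
    and X: "finite X" "X \<subseteq> loc T (D - P)"
  shows "1 \<in> lin (loc T (D - P)) {d\<in>D. \<forall>x\<in>X. d * x \<in> D}"
proof -
  let ?I = "{d\<in>D. \<forall>x\<in>X. d * x \<in> D}"
  note S = mult_subset_compl_quasi_starf_prime[OF P]
  \<comment> \<open>clear the denominators of \<open>X\<close> and apply the conductor lemma to \<open>uX \<subseteq> T\<close>\<close>
  obtain u where u: "u \<in> D - P" "\<forall>x\<in>X. u * x \<in> T" using common_denominator[OF T S X] by blast
  obtain s where s: "s \<in> D - P" "s \<in> lin T {d\<in>D. \<forall>y\<in>(\<lambda>x. u * x) ` X. d * y \<in> D}"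
    using lin_conductor_meets_compl[OF V P, of "(\<lambda>x. u * x) ` X"] X(1) u(2) by blast
  have s0: "s \<noteq> 0" "u \<noteq> 0" using s(1) u(1) quasi_starf_primeD(5)[OF P] by auto
  have L: "submod T (lin (loc T (D - P)) ?I)"
    by (rule submod_antimono[OF submod_lin[OF subring_loc_T[OF P]] T_subset_loc[OF P]])
  have "(1 / s) * s \<in> lin (loc T (D - P)) ?I"
  proof (rule mult_lin_mem[OF L s(2)])
    fix c assume c: "c \<in> {d\<in>D. \<forall>y\<in>(\<lambda>x. u * x) ` X. d * y \<in> D}"
    have "c * u \<in> ?I" using c u(1) subringD(5)[OF D] by (auto simp: mult.assoc)
    moreover have "1 / (s * u) \<in> loc T (D - P)"
      unfolding mem_loc_iff[OF mult_subsetD(3)[OF S]]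
      using mult_subsetD(4)[OF S s(1) u(1)] s0 one_mem_T by (intro bexI[of _ "s * u"]) auto
    ultimately have "(1 / (s * u)) * (c * u) \<in> lin (loc T (D - P)) ?I" by (rule mult_mem_lin[rotated])
    moreover have "(1 / (s * u)) * (c * u) = (1 / s) * c" using s0 by (simp add: field_simps)
    ultimately show "(1 / s) * c \<in> lin (loc T (D - P)) ?I" by simp
  qed
  then show ?thesis using s0 by simp
qed

lemma lin_conductor_meets_compl_if_flat:
  assumes P: "quasi_starf_prime P" and flat: "flat_module (loc D (D - P)) (loc T (D - P))"
    and x: "x \<in> T"
  shows "\<exists>s\<in>D - P. s \<in> lin T {d\<in>D. d * x \<in> D}"
proof -
  note S = mult_subset_compl_quasi_starf_prime[OF P]
  note SD = quasi_starf_primeD(7)[OF P]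
  let ?C = "{d\<in>D. d * x \<in> D}" and ?CP = "{d\<in>loc D (D - P). d * x \<in> loc D (D - P)}"
  have DL: "D \<subseteq> loc D (D - P)" by (rule subset_loc[OF mult_subsetD(2)[OF SD]])
  have "1 \<in> lin (loc T (D - P)) ?CP"
  proof (rule flat_module_one_mem_lin_conductor[OF subring_loc[OF D SD] _ subring_loc_T[OF P] flat])
    obtain b where "b \<in> D" "b \<noteq> 0" "b * x \<in> D" using exists_denominator by blast
    then show "\<exists>b\<in>loc D (D - P). b \<noteq> 0 \<and> b * x \<in> loc D (D - P)" using DL by blast
    show "x \<in> loc T (D - P)" using x T_subset_loc[OF P] by blast
  qed
  moreover have "?CP \<subseteq> loc (lin T ?C) (D - P)"
  proof
    fix a assume "a \<in> ?CP"
    then have "{a, a * x} \<subseteq> loc D (D - P)" by blast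
    from common_denominator[OF D SD _ this]
    obtain t where t: "t \<in> D - P" "t * a \<in> D" "t * (a * x) \<in> D" by auto
    then have "t * a \<in> ?C" by (simp add: mult.assoc)
    then have "t * a \<in> lin T ?C" using lin_superset[OF one_mem_T, of ?C] by blast
    then show "a \<in> loc (lin T ?C) (D - P)" unfolding mem_loc_iff[OF mult_subsetD(3)[OF S]] using t(1) by blast
  qed
  then have "lin (loc T (D - P)) ?CP \<subseteq> loc (lin T ?C) (D - P)"
    by (rule lin_loc_subset_loc[OF S submod_lin[OF T]])
  ultimately have "1 \<in> loc (lin T ?C) (D - P)" by blast
  then show ?thesis unfolding mem_loc_iff[OF mult_subsetD(3)[OF S]] by auto
qed

lemma loc_eq_at_star_primes_iff_flat:
  "loc_eq_at_star_primes \<longleftrightarrow>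
    (\<forall>P. quasi_starf_prime P \<longrightarrow> flat_module (loc D (D - P)) (loc T (D - P)))"
proof
  assume V: loc_eq_at_star_primes
  show "\<forall>P. quasi_starf_prime P \<longrightarrow> flat_module (loc D (D - P)) (loc T (D - P))"
  proof (intro allI impI)
    fix P assume P: "quasi_starf_prime P"
    have DL: "D \<subseteq> loc D (D - P)" by (rule subset_loc[OF mult_subsetD(2)[OF quasi_starf_primeD(7)[OF P]]])
    show "flat_module (loc D (D - P)) (loc T (D - P))"
    proof (rule flat_moduleI_conductor[OF subring_loc_T[OF P]])
      fix X assume X: "finite X" "X \<subseteq> loc T (D - P)"
      have "{d\<in>D. \<forall>x\<in>X. d * x \<in> D} \<subseteq> {d\<in>loc D (D - P). \<forall>x\<in>X. d * x \<in> loc D (D - P)}"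
        using DL by blast
      then show "1 \<in> lin (loc T (D - P)) {d\<in>loc D (D - P). \<forall>x\<in>X. d * x \<in> loc D (D - P)}"
        using lin_mono[OF _ order_refl] one_mem_lin_conductor_loc[OF V P X] by blast
    qed
  qed
next
  assume "\<forall>P. quasi_starf_prime P \<longrightarrow> flat_module (loc D (D - P)) (loc T (D - P))"
  then show loc_eq_at_star_primes
    unfolding loc_eq_at_star_primes_iff_conductors_meet
    using lin_conductor_meets_compl_if_flat by blast
qed

lemma lin_loc_colon_iff:
  assumes V: loc_eq_at_star_primes and P: "quasi_starf_prime P" and F: "F \<in> fgen D"
  shows "y \<in> lin (loc T (D - P)) (colon D F) \<longleftrightarrow> (\<forall>b\<in>lin T F. y * b \<in> loc T (D - P))"
proof -
  obtain G where G: "finite G" "F = lin D G" using F unfolding fgen_def by blast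
  have CG: "colon D F = colon D G" using colon_lin[OF D] G(2) by simp
  have GF: "G \<subseteq> F" unfolding G(2) by (rule lin_superset[OF one_mem_D])
  have "F \<subseteq> lin T G" unfolding G(2) by (rule lin_mono[OF order_refl D_subset_T])
  then have FG: "lin T F \<subseteq> lin T G" by (rule lin_least[OF submod_lin[OF T]])
  note L = subring_loc_T[OF P]
  show ?thesis
  proof (intro iffI ballI)
    fix b assume y: "y \<in> lin (loc T (D - P)) (colon D F)" and "b \<in> lin T F"
    then have b: "b \<in> lin T G" using FG by blast
    have "b * a \<in> loc T (D - P)" if a: "a \<in> colon D F" for a
    proof -
      have "a * g \<in> T" if "g \<in> G" for g using a that GF D_subset_T unfolding colon_def by auto
      then have "a * b \<in> T" by (rule mult_lin_mem[OF subring_submod[OF T order_refl] b])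
      then show ?thesis using T_subset_loc[OF P] by (auto simp: mult.commute)
    qed
    then have "b * y \<in> loc T (D - P)" by (rule mult_lin_mem[OF subring_submod[OF L order_refl] y])
    then show "y * b \<in> loc T (D - P)" by (simp add: mult.commute)
  next
    assume Hy: "\<forall>b\<in>lin T F. y * b \<in> loc T (D - P)"
    have "(\<lambda>g. y * g) ` G \<subseteq> loc T (D - P)" using Hy GF lin_superset[OF one_mem_T, of F] by auto
    from one_mem_lin_conductor_loc[OF V P finite_imageI[OF G(1)] this]
    have "y * 1 \<in> lin (loc T (D - P)) (colon D F)"
    proof (rule mult_lin_mem[OF submod_lin[OF L]])
      fix d assume "d \<in> {d\<in>D. \<forall>x\<in>(\<lambda>g. y * g) ` G. d * x \<in> D}"
      then have "y * d \<in> colon D G" unfolding colon_def by (auto simp: ac_simps)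
      then have "y * d \<in> colon D F" using CG by simp
      then show "y * d \<in> lin (loc T (D - P)) (colon D F)"
        using lin_superset[OF subringD(2)[OF L], of "colon D F"] by blast
    qed
    then show "y \<in> lin (loc T (D - P)) (colon D F)" by simp
  qed
qed

lemma colon_ell_T_eq:
  assumes "E \<subseteq> T" "1 \<in> E"
  shows "colon (ell_T T) E = ell_T T"
proof
  show "colon (ell_T T) E \<subseteq> ell_T T" using assms(2) unfolding colon_def by force
  show "ell_T T \<subseteq> colon (ell_T T) E"
  proof
    fix y assume y: "y \<in> ell_T T"
    have "y * b \<in> ell_T T" if b: "b \<in> E" for b
      unfolding mem_ell_T_iff
    proof (intro allI impI)
      fix P assume P: "quasi_starf_prime P"
      have "y \<in> loc T (D - P)" using y P unfolding mem_ell_T_iff by blast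
      moreover have "b \<in> loc T (D - P)" using b assms(1) T_subset_loc[OF P] by blast
      ultimately show "y * b \<in> loc T (D - P)" by (rule subringD(5)[OF subring_loc_T[OF P]])
    qed
    then show "y \<in> colon (ell_T T) E" unfolding colon_def by blast
  qed
qed

lemma loc_eq_at_star_primes_iff_colon:
  "loc_eq_at_star_primes \<longleftrightarrow> (\<forall>F\<in>fgen D. ell_T (lin T (colon D F)) = colon (ell_T T) (lin T F))"
proof
  assume V: loc_eq_at_star_primes
  show "\<forall>F\<in>fgen D. ell_T (lin T (colon D F)) = colon (ell_T T) (lin T F)"
  proof (intro ballI set_eqI)
    fix F y assume F: "F \<in> fgen D"
    have "y \<in> ell_T (lin T (colon D F)) \<longleftrightarrow>
        (\<forall>P. quasi_starf_prime P \<longrightarrow> y \<in> lin (loc T (D - P)) (colon D F))"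
      unfolding mem_ell_iff using lin_lin[OF T subring_loc_T T_subset_loc] by simp
    also have "\<dots> \<longleftrightarrow> (\<forall>P. quasi_starf_prime P \<longrightarrow> (\<forall>b\<in>lin T F. y * b \<in> loc T (D - P)))"
      using lin_loc_colon_iff[OF V _ F] by simp
    also have "\<dots> \<longleftrightarrow> y \<in> colon (ell_T T) (lin T F)" unfolding colon_def mem_ell_T_iff by blast
    finally show "y \<in> ell_T (lin T (colon D F)) \<longleftrightarrow> y \<in> colon (ell_T T) (lin T F)" .
  qed
next
  assume H: "\<forall>F\<in>fgen D. ell_T (lin T (colon D F)) = colon (ell_T T) (lin T F)"
  show loc_eq_at_star_primes unfolding loc_eq_at_star_primes_iff_conductor
  proof (intro ballI impI)
    fix x assume x: "x \<in> T" "x \<noteq> 0"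
    let ?F = "lin D {1, x}"
    have F: "?F \<in> fgen D" by (rule fgen_lin[of _ 1]) auto
    have C: "colon D ?F = {d\<in>D. d * x \<in> D}" unfolding colon_lin[OF D] unfolding colon_def by auto
    have "?F \<subseteq> T"
      by (rule lin_least[OF subring_submod[OF T D_subset_T]]) (use x one_mem_T in auto)
    then have FT: "lin T ?F \<subseteq> T" by (rule lin_subset_T)
    have "1 \<in> lin T ?F"
      using lin_superset[OF one_mem_D, of "{1, x}"] lin_superset[OF one_mem_T, of ?F] by blast
    then show "ell_T (lin T {d\<in>D. d * x \<in> D}) = ell_T T"
      using H F colon_ell_T_eq[OF FT] C by metis
  qed
qed

end

theorem proposition4p6:
  fixes D T :: "'a::field set" and st :: "'a set \<Rightarrow> 'a set"
  assumes "subring D" and "quotient_field_is_univ D"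
    and "overring D T" and "semistar D st"
  defines "l \<equiv> ell D st T"
  shows
   "(flat_st D st T l \<longleftrightarrow>
      (\<forall>P. prime_ideal_of D P \<and> P \<noteq> {0} \<longrightarrow> l (lin T P) = l T \<or> T \<subseteq> loc D (D - P)))
  \<and> (flat_st D st T l \<longleftrightarrow>
      (\<forall>x\<in>T. x \<noteq> 0 \<longrightarrow> l (lin T {d\<in>D. d * x \<in> D}) = l T))
  \<and> (flat_st D st T l \<longleftrightarrow>
      l T = \<Inter>{loc D (D - (N \<inter> D)) | N. max_prop_prime D st T N})
  \<and> (flat_st D st T l \<longleftrightarrow>
      (\<forall>Q. prime_ideal_of T Q \<and> Q \<noteq> {0} \<and> starf D st (Q \<inter> D) \<noteq> st D \<longrightarrow>
           loc D (D - (Q \<inter> D)) = loc T (T - Q)))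
  \<and> (flat_st D st T l \<longleftrightarrow>
      (\<forall>N. max_prop_prime D st T N \<longrightarrow> loc D (D - (N \<inter> D)) = loc T (T - N)))
  \<and> (flat_st D st T l \<longleftrightarrow>
      (\<forall>P. quasi_prime D (starf D st) P \<longrightarrow> flat_module (loc D (D - P)) (loc T (D - P))))
  \<and> (flat_st D st T l \<longleftrightarrow>
      (\<forall>F\<in>fgen D. l (lin T (colon D F)) = colon (l T) (lin T F)))"
proof -
  interpret overring_context D st T
    by unfold_locales (rule assms)+
  have D_Int: "D - (Q \<inter> D) = D - Q" for Q by blast
  show ?thesis
    unfolding l_def flat_st_ell_iff D_Int
    by (intro conjI loc_eq_at_star_primes_iff_primes loc_eq_at_star_primes_iff_conductor
        loc_eq_at_star_primes_iff_ell_T loc_eq_at_star_primes_iff_max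
        loc_eq_at_star_primes_iff_flat loc_eq_at_star_primes_iff_colon)
      (simp add: loc_eq_at_star_primes_def star_prime_def)
qed

end
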